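(* Let $P\in\mathcal E_0$, assume $\hat f,\hat g$ are estimated on an auxiliary data set independent of $(\mathbf X^{(n)},\mathbf Y^{(n)},\mathbf Z^{(n)})$, and let $K\ge1$ be fixed. Assume there exists $C>0$ with $|w_k(z)|\le C$ for all $z$ and $k=1,\dots,K$. Assume $A_fA_g=o_P(n^{-1})$, $B_f=o_P(1)$, $B_g=o_P(1)$, $\mathbb E_P[\epsilon_P^2\xi_P^2w_k(Z)^2]>0$ for all $k$, and $\mathbb E_P[\epsilon_P^2\xi_P^2]<\infty$. If there exists $k\in\{1,\dots,K\}$ with $\mathbb E_P[\epsilon_P\xi_Pw_k(Z)]\ne0$, then $\mathbb P_P(S_n\ge M)\to1$ for all $M>0$.
   Context: Let $X,Y$ be real-valued random variables and $Z$ a random vector in $\mathbb R^{d_Z}$. $\mathcal E_0$ is the set of distributions of $(X,Y,Z)$ absolutely continuous with respect to Lebesgue measure. For $P\in\mathcal E_0$: $f_P(z)=\mathbb E_P[X\mid Z=z]$, $g_P(z)=\mathbb E_P[Y\mid Z=z]$, $\epsilon_P=X-f_P(Z)$, $\xi_P=Y-g_P(Z)$, $u_P(z)=\mathbb E_P[\epsilon_P^2\mid Z=z]$, $v_P(z)=\mathbb E_P[\xi_P^2\mid Z=z]$. Data $(x_i,y_i,z_i)$, $i=1,\dots,n$, i.i.d. copies of $(X,Y,Z)$ form $(\mathbf X^{(n)},\mathbf Y^{(n)},\mathbf Z^{(n)})$; $\hat f,\hat g$ estimate $f_P,g_P$. $A_f=\frac1n\sum_i(f_P(z_i)-\hat f(z_i))^2$,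 $A_g=\frac1n\sum_i(g_P(z_i)-\hat g(z_i))^2$, $B_f=\frac1n\sum_i(f_P(z_i)-\hat f(z_i))^2v_P(z_i)$, $B_g=\frac1n\sum_i(g_P(z_i)-\hat g(z_i))^2u_P(z_i)$. For fixed measurable weight functions $w_1,\dots,w_K$, let $R_{ki}=(x_i-\hat f(z_i))(y_i-\hat g(z_i))w_k(z_i)$, $\mathbf R_k=(R_{k1},\dots,R_{kn})^T$, $\bar{\mathbf R}_k$ its coordinate mean, $T_k^{(n)}=\sqrt n\bar{\mathbf R}_k/(\frac1n\|\mathbf R_k\|_2^2-\bar{\mathbf R}_k^2)^{1/2}$ and $S_n=\max_{k=1,\dots,K}|T_k^{(n)}|$. $V_n=o_P(W_n)$ means $\mathbb P_P(|V_n/W_n|>\delta)\to0$ for all $\delta>0$. *)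

theory Defs
  imports "HOL-Probability.Probability"
begin

definition is_cond_exp_fun ::
  "'b measure \<Rightarrow> ('b \<Rightarrow> real) \<Rightarrow> ('b \<Rightarrow> 'c::topological_space) \<Rightarrow> ('c \<Rightarrow> real) \<Rightarrow> bool" where
  "is_cond_exp_fun P X Z f \<longleftrightarrow>
     integrable P X \<and> f \<in> borel_measurable borel \<and>
     (\<forall>A \<in> sets borel.
        integrable P (\<lambda>\<omega>. f (Z \<omega>) * indicator A (Z \<omega>)) \<and>
        (\<integral>\<omega>. X \<omega> * indicator A (Z \<omega>) \<partial>P) = (\<integral>\<omega>. f (Z \<omega>) * indicator A (Z \<omega>) \<partial>P))"

text \<open>Version of z \<mapsto> E[X | Z = z] for a nonnegative X (not necessarily integrable),
  via nonnegative integrals.\<close>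
definition is_cond_exp_fun_nonneg ::
  "'b measure \<Rightarrow> ('b \<Rightarrow> real) \<Rightarrow> ('b \<Rightarrow> 'c::topological_space) \<Rightarrow> ('c \<Rightarrow> real) \<Rightarrow> bool" where
  "is_cond_exp_fun_nonneg P X Z f \<longleftrightarrow>
     f \<in> borel_measurable borel \<and> (\<forall>z. 0 \<le> f z) \<and>
     (\<forall>A \<in> sets borel.
        (\<integral>\<^sup>+\<omega>. ennreal (X \<omega>) * indicator A (Z \<omega>) \<partial>P) =
        (\<integral>\<^sup>+\<omega>. ennreal (f (Z \<omega>)) * indicator A (Z \<omega>) \<partial>P))"

definition small_oP :: "'a measure \<Rightarrow> (nat \<Rightarrow> 'a \<Rightarrow> real) \<Rightarrow> (nat \<Rightarrow> real) \<Rightarrow> bool" where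
  "small_oP M V W \<longleftrightarrow>
     (\<forall>\<delta>>0. (\<lambda>n. measure M {\<omega> \<in> space M. \<bar>V n \<omega> / W n\<bar> > \<delta>}) \<longlonglongrightarrow> 0)"

text \<open>The normalised statistic T = sqrt n * mean(R) / (mean(R^2) - mean(R)^2)^(1/2)
  of the first n entries of R (division by zero yields 0, Isabelle's convention).\<close>
definition T_stat :: "nat \<Rightarrow> (nat \<Rightarrow> real) \<Rightarrow> real" where
  "T_stat n R =
     (let m = (\<Sum>i<n. R i) / real n;
          s2 = (\<Sum>i<n. (R i)\<^sup>2) / real n - m\<^sup>2
      in sqrt (real n) * m / sqrt s2)"

definition R_res :: "('z \<Rightarrow> real) \<Rightarrow> ('z \<Rightarrow> real) \<Rightarrow> ('z \<Rightarrow> real)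
     \<Rightarrow> (nat \<Rightarrow> real) \<Rightarrow> (nat \<Rightarrow> real) \<Rightarrow> (nat \<Rightarrow> 'z) \<Rightarrow> nat \<Rightarrow> real" where
  "R_res fh gh wk xs ys zs i = (xs i - fh (zs i)) * (ys i - gh (zs i)) * wk (zs i)"

definition S_stat :: "nat \<Rightarrow> nat \<Rightarrow> ('z \<Rightarrow> real) \<Rightarrow> ('z \<Rightarrow> real) \<Rightarrow> (nat \<Rightarrow> 'z \<Rightarrow> real)
     \<Rightarrow> (nat \<Rightarrow> real) \<Rightarrow> (nat \<Rightarrow> real) \<Rightarrow> (nat \<Rightarrow> 'z) \<Rightarrow> real" where
  "S_stat K n fh gh w xs ys zs = Max ((\<lambda>k. \<bar>T_stat n (R_res fh gh (w k) xs ys zs)\<bar>) ` {1..K})"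

end

theory Submission
  imports Defs
begin

(* Write the k-th residual product as R_i = (eps_i + a_i) (xi_i + b_i) w_k(z_i) with
   a = f_P - fhat and b = g_P - ghat.  The average of eps_i xi_i w_k(z_i) converges in
   probability to rho_k = E[eps xi w_k(Z)] \<noteq> 0 (Chebyshev), and by Cauchy-Schwarz the
   other three averages are bounded by C times the square roots of mean(eps^2 b^2),
   mean(xi^2 a^2) and A_f A_g.  Because fhat and ghat are independent of the sample,
   E[eps_i^2 | auxiliary data, z] = u_P(z_i), so mean(eps^2 b^2) is small whenever B_g is
   (and symmetrically for B_f); A_f A_g = o_P(1/n) is assumed.  Hence the numerator of T_k
   is of order sqrt n |rho_k| while the same bounds and Markov's inequality keep the
   empirical variance bounded in probability, so |T_k|, and with it S_n, diverges.  The
   variance can only vanish, making T_k = 0 by division by zero, if two residual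
   products coincide, which has probability zero since P has a Lebesgue density. *)

section \<open>Deterministic bounds on the statistic\<close>

abbreviation sample_mean :: "nat \<Rightarrow> (nat \<Rightarrow> real) \<Rightarrow> real" where
  "sample_mean n R \<equiv> (\<Sum>i<n. R i) / real n"

abbreviation sample_var :: "nat \<Rightarrow> (nat \<Rightarrow> real) \<Rightarrow> real" where
  "sample_var n R \<equiv> sample_mean n (\<lambda>i. (R i)\<^sup>2) - (sample_mean n R)\<^sup>2"

lemma T_stat_eq: "T_stat n R = sqrt (real n) * sample_mean n R / sqrt (sample_var n R)"
  by (simp add: T_stat_def Let_def)

lemma T_stat_cong: "(\<And>i. i < n \<Longrightarrow> R i = R' i) \<Longrightarrow> T_stat n R = T_stat n R'"
proof -
  assume h: "\<And>i. i < n \<Longrightarrow> R i = R' i"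
  have "(\<Sum>i<n. R i) = (\<Sum>i<n. R' i)" "(\<Sum>i<n. (R i)\<^sup>2) = (\<Sum>i<n. (R' i)\<^sup>2)"
    by (auto intro!: sum.cong simp: h)
  then show ?thesis unfolding T_stat_eq by simp
qed

lemma sum_sq_centered_eq:
  fixes R :: "nat \<Rightarrow> real"
  assumes n: "0 < n"
  shows "(\<Sum>i<n. (R i - sample_mean n R)\<^sup>2) = real n * sample_var n R"
proof -
  define m where "m = sample_mean n R"
  have sum_R: "(\<Sum>i<n. R i) = real n * m" using n by (simp add: m_def)
  have "(\<Sum>i<n. (R i - m)\<^sup>2) = (\<Sum>i<n. ((R i)\<^sup>2 + m\<^sup>2) - (2 * m) * R i)"
    by (rule sum.cong) (simp_all add: power2_diff)
  also have "\<dots> = (\<Sum>i<n. (R i)\<^sup>2) - 2 * m * (\<Sum>i<n. R i) + real n * m\<^sup>2"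
    by (simp only: sum_subtractf sum.distrib sum_distrib_left[symmetric]) simp
  also have "\<dots> = real n * (sample_mean n (\<lambda>i. (R i)\<^sup>2) - m\<^sup>2)"
    using n by (simp add: sum_R power2_eq_square algebra_simps)
  finally show ?thesis by (simp only: m_def)
qed

lemma sample_var_nonneg:
  assumes n: "0 < n"
  shows "0 \<le> sample_var n R"
proof -
  have "0 \<le> (\<Sum>i<n. (R i - sample_mean n R)\<^sup>2)" by (intro sum_nonneg) simp
  then have "0 \<le> real n * sample_var n R" by (simp only: sum_sq_centered_eq[OF n])
  then show ?thesis using n by (simp add: zero_le_mult_iff)
qed

lemma sample_var_eq_0_imp_eq_mean:
  assumes n: "0 < n" and var: "sample_var n R = 0" and i: "i < n"
  shows "R i = sample_mean n R"
proof -
  define m where "m = sample_mean n R"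
  have "(\<Sum>i<n. (R i - m)\<^sup>2) = 0"
    unfolding m_def by (simp only: sum_sq_centered_eq[OF n] var mult_zero_right)
  then have "(R i - m)\<^sup>2 = 0"
    using i sum_nonneg_eq_0_iff[of "{..<n}" "\<lambda>i. (R i - m)\<^sup>2"] by simp
  then show ?thesis by (simp add: m_def)
qed

lemma abs_T_stat_ge:
  assumes n: "0 < n" and var_pos: "0 < sample_var n R" and var_le: "sample_var n R \<le> Q"
    and g: "0 \<le> g" "g \<le> \<bar>sample_mean n R\<bar>"
  shows "sqrt (real n) * g / sqrt Q \<le> \<bar>T_stat n R\<bar>"
proof -
  have "sqrt (real n) * g / sqrt Q \<le> sqrt (real n) * \<bar>sample_mean n R\<bar> / sqrt (sample_var n R)"
  proof (rule frac_le)
    show "0 \<le> sqrt (real n) * \<bar>sample_mean n R\<bar>" by simp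
    show "sqrt (real n) * g \<le> sqrt (real n) * \<bar>sample_mean n R\<bar>"
      using g by (intro mult_left_mono) auto
    show "0 < sqrt (sample_var n R)" using var_pos by simp
    show "sqrt (sample_var n R) \<le> sqrt Q" using var_le by simp
  qed
  also have "\<dots> = \<bar>T_stat n R\<bar>"
    using var_pos by (simp add: T_stat_eq abs_mult)
  finally show ?thesis .
qed

lemma abs_sample_mean_mult_le:
  fixes a b W :: "nat \<Rightarrow> real"
  assumes n: "0 < n" and W: "\<And>i. i < n \<Longrightarrow> \<bar>W i\<bar> \<le> C"
  shows "\<bar>sample_mean n (\<lambda>i. a i * b i * W i)\<bar>
    \<le> C * sqrt (sample_mean n (\<lambda>i. (a i)\<^sup>2) * sample_mean n (\<lambda>i. (b i)\<^sup>2))"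
proof -
  define S where "S = sample_mean n (\<lambda>i. (a i)\<^sup>2) * sample_mean n (\<lambda>i. (b i)\<^sup>2)"
  have C: "0 \<le> C" using W[of 0] n by auto
  have "\<bar>\<Sum>i<n. a i * b i * W i\<bar> \<le> (\<Sum>i<n. \<bar>a i\<bar> * \<bar>b i\<bar> * C)"
    by (rule order_trans[OF sum_abs]) (auto intro!: sum_mono simp: abs_mult intro: mult_left_mono W)
  also have "\<dots> = C * (\<Sum>i<n. \<bar>a i\<bar> * \<bar>b i\<bar>)" by (simp add: sum_distrib_left mult.commute)
  also have "\<dots> \<le> C * sqrt ((\<Sum>i<n. (a i)\<^sup>2) * (\<Sum>i<n. (b i)\<^sup>2))"
  proof (rule mult_left_mono[OF _ C])
    have "(\<Sum>i<n. \<bar>a i\<bar> * \<bar>b i\<bar>)\<^sup>2 \<le> (\<Sum>i<n. \<bar>a i\<bar>\<^sup>2) * (\<Sum>i<n. \<bar>b i\<bar>\<^sup>2)"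
      by (rule Cauchy_Schwarz_ineq_sum)
    then show "(\<Sum>i<n. \<bar>a i\<bar> * \<bar>b i\<bar>) \<le> sqrt ((\<Sum>i<n. (a i)\<^sup>2) * (\<Sum>i<n. (b i)\<^sup>2))"
      by (simp add: real_le_rsqrt)
  qed
  also have "sqrt ((\<Sum>i<n. (a i)\<^sup>2) * (\<Sum>i<n. (b i)\<^sup>2)) = real n * sqrt S"
  proof -
    have eq: "(\<Sum>i<n. (a i)\<^sup>2) * (\<Sum>i<n. (b i)\<^sup>2) = (real n)\<^sup>2 * S"
      using n by (simp add: S_def power2_eq_square field_simps)
    show ?thesis by (subst eq, subst real_sqrt_mult, simp)
  qed
  finally have "\<bar>\<Sum>i<n. a i * b i * W i\<bar> \<le> C * (real n * sqrt S)" .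
  then have "\<bar>\<Sum>i<n. a i * b i * W i\<bar> / real n \<le> C * (real n * sqrt S) / real n"
    by (rule divide_right_mono) simp
  then show ?thesis using n by (simp add: S_def abs_divide)
qed

lemma abs_sample_mean_mult_le':
  fixes u W :: "nat \<Rightarrow> real"
  assumes n: "0 < n" and W: "\<And>i. i < n \<Longrightarrow> \<bar>W i\<bar> \<le> C"
  shows "\<bar>sample_mean n (\<lambda>i. u i * W i)\<bar> \<le> C * sqrt (sample_mean n (\<lambda>i. (u i)\<^sup>2))"
  using abs_sample_mean_mult_le[OF n W, where a=u and b="\<lambda>_. 1"] n by simp

lemma sum_sq_mult_le:
  fixes a b :: "nat \<Rightarrow> real"
  shows "(\<Sum>i<n. (a i)\<^sup>2 * (b i)\<^sup>2) \<le> (\<Sum>i<n. (a i)\<^sup>2) * (\<Sum>i<n. (b i)\<^sup>2)"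
proof -
  have "(\<Sum>i<n. (a i)\<^sup>2 * (b i)\<^sup>2) \<le> (\<Sum>i<n. (a i)\<^sup>2 * (\<Sum>j<n. (b j)\<^sup>2))"
    by (intro sum_mono mult_left_mono) (auto intro: member_le_sum)
  then show ?thesis by (simp add: sum_distrib_right)
qed

lemma power2_sum4_le: "((p::real) + q + r + s)\<^sup>2 \<le> 4 * (p\<^sup>2 + q\<^sup>2 + r\<^sup>2 + s\<^sup>2)"
proof -
  have "0 \<le> (p-q)\<^sup>2 + (p-r)\<^sup>2 + (p-s)\<^sup>2 + (q-r)\<^sup>2 + (q-s)\<^sup>2 + (r-s)\<^sup>2" by simp
  then show ?thesis by (simp add: power2_eq_square algebra_simps)
qed

lemma abs_sample_mean_residual_product_sub_le:
  fixes e x a b W :: "nat \<Rightarrow> real"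
  assumes n: "0 < n" and W: "\<And>i. i < n \<Longrightarrow> \<bar>W i\<bar> \<le> C"
  shows "\<bar>sample_mean n (\<lambda>i. (e i + a i) * (x i + b i) * W i) - c\<bar>
    \<le> \<bar>sample_mean n (\<lambda>i. e i * x i * W i) - c\<bar>
      + C * sqrt (sample_mean n (\<lambda>i. (e i)\<^sup>2 * (b i)\<^sup>2))
      + C * sqrt (sample_mean n (\<lambda>i. (x i)\<^sup>2 * (a i)\<^sup>2))
      + C * sqrt (sample_mean n (\<lambda>i. (a i)\<^sup>2) * sample_mean n (\<lambda>i. (b i)\<^sup>2))"
proof -
  have "sample_mean n (\<lambda>i. (e i + a i) * (x i + b i) * W i)
      = sample_mean n (\<lambda>i. e i * x i * W i) + sample_mean n (\<lambda>i. (e i * b i) * W i)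
        + sample_mean n (\<lambda>i. (a i * x i) * W i) + sample_mean n (\<lambda>i. a i * b i * W i)"
    by (simp add: algebra_simps sum.distrib add_divide_distrib)
  moreover have "\<bar>sample_mean n (\<lambda>i. (e i * b i) * W i)\<bar>
      \<le> C * sqrt (sample_mean n (\<lambda>i. (e i)\<^sup>2 * (b i)\<^sup>2))"
    using abs_sample_mean_mult_le'[where u="\<lambda>i. e i * b i", OF n W] by (simp add: power_mult_distrib)
  moreover have "\<bar>sample_mean n (\<lambda>i. (a i * x i) * W i)\<bar>
      \<le> C * sqrt (sample_mean n (\<lambda>i. (x i)\<^sup>2 * (a i)\<^sup>2))"
    using abs_sample_mean_mult_le'[where u="\<lambda>i. a i * x i", OF n W]
    by (simp add: power_mult_distrib mult.commute)
  moreover note abs_sample_mean_mult_le[where a=a and b=b and W=W, OF n W]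
  ultimately show ?thesis by linarith
qed

lemma sample_mean_sq_residual_product_le:
  fixes e x a b W :: "nat \<Rightarrow> real"
  assumes n: "0 < n" and W: "\<And>i. i < n \<Longrightarrow> \<bar>W i\<bar> \<le> C"
  shows "sample_mean n (\<lambda>i. ((e i + a i) * (x i + b i) * W i)\<^sup>2)
    \<le> 4 * C\<^sup>2 * (sample_mean n (\<lambda>i. (e i)\<^sup>2 * (x i)\<^sup>2)
      + sample_mean n (\<lambda>i. (e i)\<^sup>2 * (b i)\<^sup>2) + sample_mean n (\<lambda>i. (x i)\<^sup>2 * (a i)\<^sup>2)
      + real n * (sample_mean n (\<lambda>i. (a i)\<^sup>2) * sample_mean n (\<lambda>i. (b i)\<^sup>2)))"
proof -
  have C: "0 \<le> C" using W[of 0] n by auto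
  have term_le: "((e i + a i) * (x i + b i) * W i)\<^sup>2
      \<le> 4 * C\<^sup>2 * ((e i)\<^sup>2 * (x i)\<^sup>2 + (e i)\<^sup>2 * (b i)\<^sup>2 + (x i)\<^sup>2 * (a i)\<^sup>2 + (a i)\<^sup>2 * (b i)\<^sup>2)"
    if i: "i < n" for i
  proof -
    have "(e i + a i) * (x i + b i) * W i = (e i * x i + e i * b i + a i * x i + a i * b i) * W i"
      by (simp add: algebra_simps)
    then have "((e i + a i) * (x i + b i) * W i)\<^sup>2 = (e i * x i + e i * b i + a i * x i + a i * b i)\<^sup>2 * (W i)\<^sup>2"
      by (simp only: power_mult_distrib)
    also have "\<dots> \<le> (4 * ((e i)\<^sup>2 * (x i)\<^sup>2 + (e i)\<^sup>2 * (b i)\<^sup>2 + (x i)\<^sup>2 * (a i)\<^sup>2 + (a i)\<^sup>2 * (b i)\<^sup>2)) * C\<^sup>2"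
    proof (rule mult_mono)
      show "(e i * x i + e i * b i + a i * x i + a i * b i)\<^sup>2
          \<le> 4 * ((e i)\<^sup>2 * (x i)\<^sup>2 + (e i)\<^sup>2 * (b i)\<^sup>2 + (x i)\<^sup>2 * (a i)\<^sup>2 + (a i)\<^sup>2 * (b i)\<^sup>2)"
        using power2_sum4_le[of "e i * x i" "e i * b i" "a i * x i" "a i * b i"]
        by (simp add: power_mult_distrib mult_ac)
      show "(W i)\<^sup>2 \<le> C\<^sup>2" using W[OF i] C by (metis abs_le_square_iff abs_of_nonneg)
    qed auto
    finally show ?thesis by (simp add: algebra_simps)
  qed
  have "(\<Sum>i<n. ((e i + a i) * (x i + b i) * W i)\<^sup>2)
      \<le> (\<Sum>i<n. 4 * C\<^sup>2 * ((e i)\<^sup>2 * (x i)\<^sup>2 + (e i)\<^sup>2 * (b i)\<^sup>2 + (x i)\<^sup>2 * (a i)\<^sup>2 + (a i)\<^sup>2 * (b i)\<^sup>2))"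
    by (intro sum_mono term_le) simp
  also have "\<dots> = 4 * C\<^sup>2 * ((\<Sum>i<n. (e i)\<^sup>2 * (x i)\<^sup>2) + (\<Sum>i<n. (e i)\<^sup>2 * (b i)\<^sup>2)
      + (\<Sum>i<n. (x i)\<^sup>2 * (a i)\<^sup>2) + (\<Sum>i<n. (a i)\<^sup>2 * (b i)\<^sup>2))"
    by (simp only: sum_distrib_left[symmetric] sum.distrib)
  also have "\<dots> \<le> 4 * C\<^sup>2 * ((\<Sum>i<n. (e i)\<^sup>2 * (x i)\<^sup>2) + (\<Sum>i<n. (e i)\<^sup>2 * (b i)\<^sup>2)
      + (\<Sum>i<n. (x i)\<^sup>2 * (a i)\<^sup>2) + (\<Sum>i<n. (a i)\<^sup>2) * (\<Sum>i<n. (b i)\<^sup>2))"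
    using sum_sq_mult_le[where a=a and b=b and n=n] by (intro mult_left_mono) auto
  finally show ?thesis
    using n by (simp add: divide_right_mono field_simps power2_eq_square)
qed

lemma abs_T_stat_residual_product_ge:
  fixes e x a b W R :: "nat \<Rightarrow> real" and C c t :: real
  defines "\<delta> \<equiv> \<bar>c\<bar> / (8 * C)"
  assumes n: "2 \<le> n" and C: "0 < C" and W: "\<And>i. i < n \<Longrightarrow> \<bar>W i\<bar> \<le> C"
    and R: "\<And>i. R i = (e i + a i) * (x i + b i) * W i"
    and c: "c \<noteq> 0"
    and exW: "\<bar>sample_mean n (\<lambda>i. e i * x i * W i) - c\<bar> < \<bar>c\<bar> / 8"
    and eb: "sample_mean n (\<lambda>i. (e i)\<^sup>2 * (b i)\<^sup>2) < \<delta>\<^sup>2"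
    and xa: "sample_mean n (\<lambda>i. (x i)\<^sup>2 * (a i)\<^sup>2) < \<delta>\<^sup>2"
    and ab: "real n * (sample_mean n (\<lambda>i. (a i)\<^sup>2) * sample_mean n (\<lambda>i. (b i)\<^sup>2)) < 1"
    and ex: "sample_mean n (\<lambda>i. (e i)\<^sup>2 * (x i)\<^sup>2) < t"
    and no_tie: "\<not> (R 0 = R 1 \<and> R 1 \<noteq> 0)"
    and large_n: "C / sqrt (real n) \<le> \<bar>c\<bar> / 8"
  shows "sqrt (real n) * (\<bar>c\<bar> / 2) / sqrt (4 * C\<^sup>2 * (t + 2 * \<delta>\<^sup>2 + 1)) \<le> \<bar>T_stat n R\<bar>"
proof -
  have n0: "0 < n" using n by simp
  have R_fun: "R = (\<lambda>i. (e i + a i) * (x i + b i) * W i)" using R by auto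
  have C_sqrt_\<delta>: "C * sqrt (\<delta>\<^sup>2) = \<bar>c\<bar> / 8" using C by (simp add: \<delta>_def)
  have eb': "C * sqrt (sample_mean n (\<lambda>i. (e i)\<^sup>2 * (b i)\<^sup>2)) < \<bar>c\<bar> / 8"
    using eb C C_sqrt_\<delta> by (metis mult_strict_left_mono real_sqrt_less_iff)
  have xa': "C * sqrt (sample_mean n (\<lambda>i. (x i)\<^sup>2 * (a i)\<^sup>2)) < \<bar>c\<bar> / 8"
    using xa C C_sqrt_\<delta> by (metis mult_strict_left_mono real_sqrt_less_iff)
  have ab': "C * sqrt (sample_mean n (\<lambda>i. (a i)\<^sup>2) * sample_mean n (\<lambda>i. (b i)\<^sup>2)) \<le> \<bar>c\<bar> / 8"
  proof -
    have "sqrt (sample_mean n (\<lambda>i. (a i)\<^sup>2) * sample_mean n (\<lambda>i. (b i)\<^sup>2)) \<le> sqrt (1 / real n)"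
      using ab n0 by (intro real_sqrt_le_mono) (simp add: field_simps mult.commute)
    then have "C * sqrt (sample_mean n (\<lambda>i. (a i)\<^sup>2) * sample_mean n (\<lambda>i. (b i)\<^sup>2)) \<le> C * (1 / sqrt (real n))"
      using C by (intro mult_left_mono) (simp_all add: real_sqrt_divide)
    also have "\<dots> = C / sqrt (real n)" by simp
    also have "\<dots> \<le> \<bar>c\<bar> / 8" by (rule large_n)
    finally show ?thesis .
  qed
  have mean_R: "\<bar>c\<bar> / 2 \<le> \<bar>sample_mean n R\<bar>"
    using abs_sample_mean_residual_product_sub_le[where e=e and a=a and x=x and b=b and W=W and c=c, OF n0 W] exW eb' xa' ab'
    unfolding R_fun by linarith
  have var_le: "sample_var n R \<le> 4 * C\<^sup>2 * (t + 2 * \<delta>\<^sup>2 + 1)"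
  proof -
    have "sample_mean n (\<lambda>i. (R i)\<^sup>2) \<le> 4 * C\<^sup>2 * (t + 2 * \<delta>\<^sup>2 + 1)"
      using sample_mean_sq_residual_product_le[where e=e and a=a and x=x and b=b and W=W, OF n0 W] eb xa ab ex
      unfolding R_fun by (smt (verit) mult_left_mono zero_le_power2)
    then show ?thesis using zero_le_power2[of "sample_mean n R"] by linarith
  qed
  have var_pos: "0 < sample_var n R"
  proof -
    have "sample_var n R \<noteq> 0"
    proof
      assume "sample_var n R = 0"
      then have "R 0 = sample_mean n R" "R 1 = sample_mean n R"
        using n by (auto intro: sample_var_eq_0_imp_eq_mean[OF n0])
      then show False using no_tie mean_R c by auto
    qed
    then show ?thesis using sample_var_nonneg[OF n0, of R] by linarith
  qed
  show ?thesis by (rule abs_T_stat_ge[OF n0 var_pos var_le _ mean_R]) simp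
qed

lemma tendsto_zero_if_eventually_le:
  fixes p :: "nat \<Rightarrow> real"
  assumes "\<And>n. 0 \<le> p n" "\<And>r. 0 < r \<Longrightarrow> eventually (\<lambda>n. p n \<le> r) sequentially"
  shows "p \<longlonglongrightarrow> 0"
proof (rule order_tendstoI)
  fix a :: real assume "a < 0" then show "eventually (\<lambda>n. a < p n) sequentially"
    using assms(1) by (intro always_eventually) (auto intro: less_le_trans)
next
  fix a :: real assume "0 < a"
  then have "eventually (\<lambda>n. p n \<le> a / 2) sequentially" by (intro assms(2)) simp
  then show "eventually (\<lambda>n. p n < a) sequentially" by eventually_elim (use \<open>0 < a\<close> in simp)
qed

lemma tendsto_one_if_eventually_ge:
  fixes p :: "nat \<Rightarrow> real"
  assumes "\<And>n. p n \<le> 1" "\<And>r. 0 < r \<Longrightarrow> eventually (\<lambda>n. 1 - r \<le> p n) sequentially"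
  shows "p \<longlonglongrightarrow> 1"
proof -
  have "(\<lambda>n. 1 - p n) \<longlonglongrightarrow> 0"
  proof (rule tendsto_zero_if_eventually_le)
    show "0 \<le> 1 - p n" for n using assms(1)[of n] by simp
    show "eventually (\<lambda>n. 1 - p n \<le> r) sequentially" if "0 < r" for r
      using assms(2)[OF that] by eventually_elim simp
  qed
  then have "(\<lambda>n. 1 - (1 - p n)) \<longlonglongrightarrow> 1 - 0" by (intro tendsto_intros)
  then show ?thesis by simp
qed

lemma (in prob_space) prob_le_nn_integral_div:
  fixes I :: "'a \<Rightarrow> ennreal"
  assumes S: "S \<in> events" and t: "0 < t" and b: "0 \<le> b"
    and I_ge: "\<And>\<omega>. \<omega> \<in> S \<Longrightarrow> ennreal t \<le> I \<omega>"
    and I_int: "(\<integral>\<^sup>+\<omega>. I \<omega> \<partial>M) \<le> ennreal b"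
  shows "prob S \<le> b / t"
proof -
  have "ennreal t * emeasure M S = (\<integral>\<^sup>+\<omega>. ennreal t * indicator S \<omega> \<partial>M)"
    using S by (simp add: nn_integral_cmult_indicator)
  also have "\<dots> \<le> (\<integral>\<^sup>+\<omega>. I \<omega> \<partial>M)"
    by (rule nn_integral_mono) (auto simp: indicator_def I_ge)
  also have "\<dots> \<le> ennreal b" by (rule I_int)
  finally have "ennreal (t * prob S) \<le> ennreal b"
    using t by (simp add: emeasure_eq_measure ennreal_mult)
  then have "t * prob S \<le> b" using b by simp
  then show ?thesis using t by (simp add: field_simps)
qed

lemma (in prob_space) prob_disj_le:
  assumes "{\<omega> \<in> space M. A \<omega>} \<in> events" "{\<omega> \<in> space M. B \<omega>} \<in> events"
  shows "prob {\<omega> \<in> space M. A \<omega> \<or> B \<omega>} \<le> prob {\<omega> \<in> space M. A \<omega>} + prob {\<omega> \<in> space M. B \<omega>}"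
proof -
  have "{\<omega> \<in> space M. A \<omega> \<or> B \<omega>} = {\<omega> \<in> space M. A \<omega>} \<union> {\<omega> \<in> space M. B \<omega>}" by auto
  then show ?thesis using measure_Un_le[OF assms] by simp
qed

lemma ennreal_sample_mean_mult:
  fixes A B :: "nat \<Rightarrow> real" and I :: ennreal
  assumes "\<And>i. 0 \<le> A i" "\<And>i. 0 \<le> B i"
  shows "ennreal (sample_mean n (\<lambda>i. A i * B i)) * I
    = ennreal (1 / real n) * (\<Sum>i<n. ennreal (A i) * (ennreal (B i) * I))"
proof -
  have "ennreal (sample_mean n (\<lambda>i. A i * B i)) = ennreal (1 / real n) * ennreal (\<Sum>i<n. A i * B i)"
    by (simp add: ennreal_mult'[symmetric])
  also have "ennreal (\<Sum>i<n. A i * B i) = (\<Sum>i<n. ennreal (A i) * ennreal (B i))"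
    by (subst sum_ennreal[symmetric]) (auto simp: assms ennreal_mult)
  finally show ?thesis by (simp add: sum_distrib_right mult.assoc)
qed

lemma nn_integral_mult_comp_eq:
  fixes Q :: "'c measure" and U V :: "'c \<Rightarrow> ennreal" and Z :: "'c \<Rightarrow> 'd::topological_space"
  assumes Z[measurable]: "Z \<in> measurable Q borel" and U[measurable]: "U \<in> borel_measurable Q"
    and V[measurable]: "V \<in> borel_measurable Q"
    and ind: "\<And>A. A \<in> sets borel \<Longrightarrow>
      (\<integral>\<^sup>+p. U p * indicator A (Z p) \<partial>Q) = (\<integral>\<^sup>+p. V p * indicator A (Z p) \<partial>Q)"
    and h: "h \<in> borel_measurable borel"
  shows "(\<integral>\<^sup>+p. U p * h (Z p) \<partial>Q) = (\<integral>\<^sup>+p. V p * h (Z p) \<partial>Q)"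
  using h
proof (induct rule: borel_measurable_induct)
  case (cong f g)
  then have "f = g" by (auto simp: fun_eq_iff)
  then show ?case using cong by simp
next
  case (set A)
  then show ?case by (rule ind)
next
  case (mult u c)
  note [measurable] = mult(2)
  have "(\<integral>\<^sup>+p. W p * (c * u (Z p)) \<partial>Q) = c * (\<integral>\<^sup>+p. W p * u (Z p) \<partial>Q)"
    if [measurable]: "W \<in> borel_measurable Q" for W
    by (subst nn_integral_cmult[symmetric]) (auto simp: ac_simps)
  then show ?case using mult(4) by simp
next
  case (add u v)
  note [measurable] = add(1) add(4)
  have "(\<integral>\<^sup>+p. W p * (v (Z p) + u (Z p)) \<partial>Q) = (\<integral>\<^sup>+p. W p * v (Z p) \<partial>Q) + (\<integral>\<^sup>+p. W p * u (Z p) \<partial>Q)"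
    if [measurable]: "W \<in> borel_measurable Q" for W
    by (subst nn_integral_add[symmetric]) (auto simp: distrib_left)
  then show ?case using add(3) add(7) by simp
next
  case (seq F)
  note [measurable] = seq(1)
  have "(\<integral>\<^sup>+p. W p * (SUP i. F i) (Z p) \<partial>Q) = (SUP i. \<integral>\<^sup>+p. W p * F i (Z p) \<partial>Q)"
    if [measurable]: "W \<in> borel_measurable Q" for W
  proof -
    have "incseq (\<lambda>i p. W p * F i (Z p))"
      using seq(4) by (auto simp: incseq_def le_fun_def intro!: mult_left_mono)
    then have "(\<integral>\<^sup>+p. (SUP i. W p * F i (Z p)) \<partial>Q) = (SUP i. \<integral>\<^sup>+p. W p * F i (Z p) \<partial>Q)"
      by (rule nn_integral_monotone_convergence_SUP) measurable
    then show ?thesis by (simp add: SUP_mult_left_ennreal image_comp)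
  qed
  then show ?case using seq(3) by simp
qed

lemma is_cond_exp_fun_nonneg_nn_integral_mult:
  assumes ce: "is_cond_exp_fun_nonneg Q U Z V"
    and [measurable]: "U \<in> borel_measurable Q" "Z \<in> measurable Q borel"
    and h: "h \<in> borel_measurable borel"
  shows "(\<integral>\<^sup>+p. ennreal (U p) * h (Z p) \<partial>Q) = (\<integral>\<^sup>+p. ennreal (V (Z p)) * h (Z p) \<partial>Q)"
proof (rule nn_integral_mult_comp_eq[OF _ _ _ _ h])
  have [measurable]: "V \<in> borel_measurable borel" using ce by (simp add: is_cond_exp_fun_nonneg_def)
  show "(\<lambda>p. ennreal (V (Z p))) \<in> borel_measurable Q" by measurable
qed (use ce in \<open>auto simp: is_cond_exp_fun_nonneg_def\<close>)

text \<open>Slicing along the first coordinate: for fixed (y, z) the equation is affine in x and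
  has at most one solution, since r \<noteq> 0 excludes a vanishing slope.\<close>
lemma null_sets_lborel_residual_product_level:
  fixes F G W :: "'z::euclidean_space \<Rightarrow> real"
  assumes [measurable]: "F \<in> borel_measurable borel" "G \<in> borel_measurable borel" "W \<in> borel_measurable borel"
    and r: "r \<noteq> 0"
  shows "{p :: real \<times> real \<times> 'z. (fst p - F (snd (snd p))) * (fst (snd p) - G (snd (snd p))) * W (snd (snd p)) = r}
    \<in> null_sets lborel"
proof -
  define S where "S = {p :: real \<times> real \<times> 'z. (fst p - F (snd (snd p))) * (fst (snd p) - G (snd (snd p))) * W (snd (snd p)) = r}"
  have "(borel :: (real \<times> real \<times> 'z) measure) = borel \<Otimes>\<^sub>M borel \<Otimes>\<^sub>M borel"
    by (simp add: borel_prod)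
  then have borel3: "sets (lborel \<Otimes>\<^sub>M lborel :: (real \<times> real \<times> 'z) measure) = sets (borel \<Otimes>\<^sub>M borel \<Otimes>\<^sub>M borel)"
    by (simp only: lborel_prod sets_lborel)
  have "S = {p \<in> space (borel \<Otimes>\<^sub>M borel \<Otimes>\<^sub>M borel). (fst p - F (snd (snd p))) * (fst (snd p) - G (snd (snd p))) * W (snd (snd p)) = r}"
    by (auto simp: S_def space_pair_measure)
  also have "\<dots> \<in> sets (borel \<Otimes>\<^sub>M borel \<Otimes>\<^sub>M borel)" by measurable
  finally have S_sets: "S \<in> sets (lborel \<Otimes>\<^sub>M lborel)"
    using borel3 by simp
  have slice: "emeasure lborel ((\<lambda>x. (x, q)) -` S) = 0" for q :: "real \<times> 'z"
  proof (cases "(fst q - G (snd q)) * W (snd q) = 0")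
    case True
    then have "(\<lambda>x. (x, q)) -` S = {}" using r by (auto simp: S_def mult.assoc)
    then show ?thesis by simp
  next
    case False
    then have "(\<lambda>x. (x, q)) -` S = {F (snd q) + r / ((fst q - G (snd q)) * W (snd q))}"
      by (auto simp: S_def mult.assoc field_simps)
    then show ?thesis by simp
  qed
  have "pair_sigma_finite (lborel :: real measure) (lborel :: (real \<times> 'z) measure)"
    by (simp add: pair_sigma_finite_def lborel.sigma_finite_measure_axioms)
  then have "emeasure (lborel \<Otimes>\<^sub>M lborel) S = (\<integral>\<^sup>+q. emeasure lborel ((\<lambda>x. (x, q)) -` S) \<partial>lborel)"
    by (rule pair_sigma_finite.emeasure_pair_measure_alt2[OF _ S_sets])
  then have "emeasure lborel S = 0" by (simp add: slice lborel_prod)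
  moreover have "S \<in> sets lborel" using S_sets by (simp only: lborel_prod)
  ultimately show ?thesis unfolding S_def by (simp add: null_sets_def)
qed

section \<open>Cross-fitted residuals under the alternative\<close>

locale weighted_gcm_sample =
  fixes M :: "'a measure"
    and P :: "(real \<times> real \<times> 'z::euclidean_space) measure"
    and x y :: "nat \<Rightarrow> nat \<Rightarrow> 'a \<Rightarrow> real"
    and z :: "nat \<Rightarrow> nat \<Rightarrow> 'a \<Rightarrow> 'z"
    and N :: "nat \<Rightarrow> 'b measure"
    and aux :: "nat \<Rightarrow> 'a \<Rightarrow> 'b"
    and fhat ghat :: "nat \<Rightarrow> 'b \<Rightarrow> 'z \<Rightarrow> real"
    and fP gP uP vP :: "'z \<Rightarrow> real"
    and w :: "nat \<Rightarrow> 'z \<Rightarrow> real"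
    and K :: nat and C :: real
  assumes M: "prob_space M"
    and P_prob: "prob_space P" and P_sets: "sets P = sets borel"
    and P_ac: "absolutely_continuous lborel P"
    and fP_meas: "fP \<in> borel_measurable borel" and gP_meas: "gP \<in> borel_measurable borel"
    and uP: "is_cond_exp_fun_nonneg P (\<lambda>(x', y', z'). (x' - fP z')\<^sup>2) (\<lambda>(x', y', z'). z') uP"
    and vP: "is_cond_exp_fun_nonneg P (\<lambda>(x', y', z'). (y' - gP z')\<^sup>2) (\<lambda>(x', y', z'). z') vP"
    and data_rv: "\<And>n i. i < n \<Longrightarrow> (\<lambda>\<omega>. (x n i \<omega>, y n i \<omega>, z n i \<omega>)) \<in> borel_measurable M"
    and data_law: "\<And>n i. i < n \<Longrightarrow> distr M borel (\<lambda>\<omega>. (x n i \<omega>, y n i \<omega>, z n i \<omega>)) = P"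
    and data_indep: "\<And>n. prob_space.indep_vars M (\<lambda>_. borel)
                        (\<lambda>i \<omega>. (x n i \<omega>, y n i \<omega>, z n i \<omega>)) {..<n}"
    and aux_rv: "\<And>n. aux n \<in> measurable M (N n)"
    and fhat_meas: "\<And>n. case_prod (fhat n) \<in> borel_measurable (N n \<Otimes>\<^sub>M borel)"
    and ghat_meas: "\<And>n. case_prod (ghat n) \<in> borel_measurable (N n \<Otimes>\<^sub>M borel)"
    and aux_indep: "\<And>n. prob_space.indep_set M
        (sigma_sets (space M) {aux n -` A \<inter> space M | A. A \<in> sets (N n)})
        (sigma_sets (space M)
           {(\<lambda>\<omega>. \<lambda>i\<in>{..<n}. (x n i \<omega>, y n i \<omega>, z n i \<omega>)) -` A \<inter> space M
             | A. A \<in> sets (Pi\<^sub>M {..<n} (\<lambda>_. borel))})"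
    and w_meas: "\<And>k. w k \<in> borel_measurable borel"
    and C: "C > 0" and w_bdd: "\<And>k zz. k \<in> {1..K} \<Longrightarrow> \<bar>w k zz\<bar> \<le> C"
    and AfAg: "small_oP M
        (\<lambda>n \<omega>. ((\<Sum>i<n. (fP (z n i \<omega>) - fhat n (aux n \<omega>) (z n i \<omega>))\<^sup>2) / real n) *
               ((\<Sum>i<n. (gP (z n i \<omega>) - ghat n (aux n \<omega>) (z n i \<omega>))\<^sup>2) / real n))
        (\<lambda>n. 1 / real n)"
    and Bf: "small_oP M
        (\<lambda>n \<omega>. (\<Sum>i<n. (fP (z n i \<omega>) - fhat n (aux n \<omega>) (z n i \<omega>))\<^sup>2 * vP (z n i \<omega>)) / real n)
        (\<lambda>n. 1)"
    and Bg: "small_oP M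
        (\<lambda>n \<omega>. (\<Sum>i<n. (gP (z n i \<omega>) - ghat n (aux n \<omega>) (z n i \<omega>))\<^sup>2 * uP (z n i \<omega>)) / real n)
        (\<lambda>n. 1)"
    and fin_mom: "(\<integral>\<^sup>+(x', y', z'). ennreal ((x' - fP z')\<^sup>2 * (y' - gP z')\<^sup>2) \<partial>P) < \<infinity>"
begin

sublocale M: prob_space M by (rule M)
sublocale PP: prob_space P by (rule P_prob)

declare fP_meas[measurable] gP_meas[measurable] w_meas[measurable] aux_rv[measurable]
  fhat_meas[measurable] ghat_meas[measurable]

lemma uP_meas[measurable]: "uP \<in> borel_measurable borel"
  using uP by (simp add: is_cond_exp_fun_nonneg_def)

lemma vP_meas[measurable]: "vP \<in> borel_measurable borel"
  using vP by (simp add: is_cond_exp_fun_nonneg_def)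

lemma uP_nonneg: "0 \<le> uP zz"
  using uP by (simp add: is_cond_exp_fun_nonneg_def)

lemma vP_nonneg: "0 \<le> vP zz"
  using vP by (simp add: is_cond_exp_fun_nonneg_def)

lemma borel_eq_pair3: "(borel :: (real \<times> real \<times> 'z) measure) = borel \<Otimes>\<^sub>M borel \<Otimes>\<^sub>M borel"
  by (simp add: borel_prod)

lemma measurable_P_eq: "measurable P L = measurable (borel \<Otimes>\<^sub>M borel \<Otimes>\<^sub>M borel) L"
  by (rule measurable_cong_sets[OF _ refl]) (simp only: P_sets borel_eq_pair3[symmetric])

text \<open>The data are only given for i < n; padding by a constant makes every obs n i
  a random variable, which keeps measurability side conditions free of i < n.\<close>
definition obs :: "nat \<Rightarrow> nat \<Rightarrow> 'a \<Rightarrow> real \<times> real \<times> 'z" where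
  "obs n i \<omega> = (if i < n then (x n i \<omega>, y n i \<omega>, z n i \<omega>) else (0, 0, 0))"

abbreviation zobs :: "nat \<Rightarrow> nat \<Rightarrow> 'a \<Rightarrow> 'z" where
  "zobs n i \<omega> \<equiv> snd (snd (obs n i \<omega>))"

definition sample :: "nat \<Rightarrow> 'a \<Rightarrow> nat \<Rightarrow> real \<times> real \<times> 'z" where
  "sample n \<omega> = (\<lambda>i\<in>{..<n}. obs n i \<omega>)"

definition zsample :: "nat \<Rightarrow> 'a \<Rightarrow> nat \<Rightarrow> 'z" where
  "zsample n \<omega> = (\<lambda>i\<in>{..<n}. zobs n i \<omega>)"

lemma obs_eq: "i < n \<Longrightarrow> obs n i = (\<lambda>\<omega>. (x n i \<omega>, y n i \<omega>, z n i \<omega>))"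
  by (simp add: obs_def fun_eq_iff)

lemma obs_meas[measurable]: "obs n i \<in> borel_measurable M"
proof (cases "i < n")
  case True
  then show ?thesis by (simp add: obs_eq data_rv)
next
  case False
  then have "obs n i = (\<lambda>_. (0, 0, 0))" by (simp add: obs_def fun_eq_iff)
  then show ?thesis by simp
qed

lemma obs_meas_pair3[measurable]: "obs n i \<in> measurable M (borel \<Otimes>\<^sub>M borel \<Otimes>\<^sub>M borel)"
  using obs_meas by (simp add: borel_eq_pair3)

lemma sample_meas[measurable]: "sample n \<in> measurable M (PiM {..<n} (\<lambda>_. borel))"
  unfolding sample_def by measurable

lemma zsample_meas[measurable]: "zsample n \<in> measurable M (PiM {..<n} (\<lambda>_. borel))"
  unfolding zsample_def by measurable

lemma distr_obs: "i < n \<Longrightarrow> distr M borel (obs n i) = P"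
  by (simp add: obs_eq data_law)

lemma indep_vars_obs: "M.indep_vars (\<lambda>_. borel) (obs n) {..<n}"
  using data_indep[of n] by (subst M.indep_vars_cong[OF refl _ refl]) (auto simp: obs_eq)

lemma distr_sample: "0 < n \<Longrightarrow> distr M (PiM {..<n} (\<lambda>_. borel)) (sample n) = PiM {..<n} (\<lambda>_. P)"
proof -
  assume n: "0 < n"
  have "distr M (PiM {..<n} (\<lambda>_. borel)) (sample n) = PiM {..<n} (\<lambda>i. distr M borel (obs n i))"
    using M.indep_vars_iff_distr_eq_PiM'[where I="{..<n}" and M'="\<lambda>_. borel" and X="obs n"]
      indep_vars_obs n by (auto simp: sample_def[abs_def])
  also have "\<dots> = PiM {..<n} (\<lambda>_. P)"
    by (intro PiM_cong) (auto simp: distr_obs)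
  finally show ?thesis .
qed

lemma distr_aux_sample:
  "distr M (N n \<Otimes>\<^sub>M PiM {..<n} (\<lambda>_. borel)) (\<lambda>\<omega>. (aux n \<omega>, sample n \<omega>))
    = distr M (N n) (aux n) \<Otimes>\<^sub>M distr M (PiM {..<n} (\<lambda>_. borel)) (sample n)"
proof -
  have sample_eq: "sample n = (\<lambda>\<omega>. \<lambda>i\<in>{..<n}. (x n i \<omega>, y n i \<omega>, z n i \<omega>))"
    by (auto simp: sample_def obs_def fun_eq_iff)
  interpret A: prob_space "distr M (N n) (aux n)" by (rule M.prob_space_distr) simp
  interpret B: prob_space "distr M (PiM {..<n} (\<lambda>_. borel)) (sample n)" by (rule M.prob_space_distr) simp
  show ?thesis
  proof (rule pair_measure_eqI[symmetric])
    show "sigma_finite_measure (distr M (N n) (aux n))" by unfold_locales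
    show "sigma_finite_measure (distr M (PiM {..<n} (\<lambda>_. borel)) (sample n))" by unfold_locales
    show "sets (distr M (N n) (aux n) \<Otimes>\<^sub>M distr M (PiM {..<n} (\<lambda>_. borel)) (sample n)) =
      sets (distr M (N n \<Otimes>\<^sub>M PiM {..<n} (\<lambda>_. borel)) (\<lambda>\<omega>. (aux n \<omega>, sample n \<omega>)))"
      by (simp cong: sets_pair_measure_cong)
    fix A B assume "A \<in> sets (distr M (N n) (aux n))" and "B \<in> sets (distr M (PiM {..<n} (\<lambda>_. borel)) (sample n))"
    then have A: "A \<in> sets (N n)" and B: "B \<in> sets (PiM {..<n} (\<lambda>_. borel))" by auto
    have "emeasure (distr M (N n \<Otimes>\<^sub>M PiM {..<n} (\<lambda>_. borel)) (\<lambda>\<omega>. (aux n \<omega>, sample n \<omega>))) (A \<times> B)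
        = emeasure M ((aux n -` A \<inter> space M) \<inter> (sample n -` B \<inter> space M))"
      using A B by (subst emeasure_distr) (auto intro!: arg_cong[where f="emeasure M"])
    also have "\<dots> = M.prob (aux n -` A \<inter> space M) * M.prob (sample n -` B \<inter> space M)"
    proof -
      have "M.prob ((aux n -` A \<inter> space M) \<inter> (sample n -` B \<inter> space M))
          = M.prob (aux n -` A \<inter> space M) * M.prob (sample n -` B \<inter> space M)"
        by (rule M.indep_setD[OF aux_indep[of n]]) (use A B sample_eq in \<open>auto intro!: sigma_sets.Basic\<close>)
      then show ?thesis by (simp add: M.emeasure_eq_measure ennreal_mult)
    qed
    also have "\<dots> = emeasure (distr M (N n) (aux n)) A * emeasure (distr M (PiM {..<n} (\<lambda>_. borel)) (sample n)) B"
      using A B by (simp add: emeasure_distr M.emeasure_eq_measure ennreal_mult)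
    finally show "emeasure (distr M (N n) (aux n)) A * emeasure (distr M (PiM {..<n} (\<lambda>_. borel)) (sample n)) B =
       emeasure (distr M (N n \<Otimes>\<^sub>M PiM {..<n} (\<lambda>_. borel)) (\<lambda>\<omega>. (aux n \<omega>, sample n \<omega>))) (A \<times> B)" by simp
  qed
qed

interpretation PiP: product_prob_space "\<lambda>_::nat. P" by unfold_locales

lemma sets_PiM_P: "sets (PiM I (\<lambda>_. P)) = sets (PiM I (\<lambda>_. borel))"
  by (rule sets_PiM_cong) (auto simp: P_sets)

lemma nn_integral_aux_sample:
  assumes i: "i < n" and G[measurable]: "G \<in> borel_measurable (N n \<Otimes>\<^sub>M PiM {..<n} (\<lambda>_. borel))"
  shows "(\<integral>\<^sup>+\<omega>. G (aux n \<omega>, sample n \<omega>) \<partial>M) =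
    (\<integral>\<^sup>+a. \<integral>\<^sup>+g. \<integral>\<^sup>+d. G (a, g(i:=d)) \<partial>P \<partial>PiM ({..<n}-{i}) (\<lambda>_. P) \<partial>distr M (N n) (aux n))"
proof -
  let ?A = "distr M (N n) (aux n)"
  interpret A: prob_space ?A by (rule M.prob_space_distr) simp
  interpret PN: prob_space "PiM {..<n} (\<lambda>_. P)" by (rule prob_space_PiM) (rule P_prob)
  have G': "G \<in> borel_measurable (?A \<Otimes>\<^sub>M PiM {..<n} (\<lambda>_. P))"
    using G by (subst measurable_cong_sets[OF sets_pair_measure_cong[OF sets_distr sets_PiM_P] refl])
  have "(\<integral>\<^sup>+\<omega>. G (aux n \<omega>, sample n \<omega>) \<partial>M)
      = (\<integral>\<^sup>+p. G p \<partial>distr M (N n \<Otimes>\<^sub>M PiM {..<n} (\<lambda>_. borel)) (\<lambda>\<omega>. (aux n \<omega>, sample n \<omega>)))"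
    by (subst nn_integral_distr) auto
  also have "\<dots> = (\<integral>\<^sup>+p. G p \<partial>(?A \<Otimes>\<^sub>M PiM {..<n} (\<lambda>_. P)))"
    using i by (simp add: distr_aux_sample distr_sample)
  also have "\<dots> = (\<integral>\<^sup>+a. \<integral>\<^sup>+f. G (a, f) \<partial>PiM {..<n} (\<lambda>_. P) \<partial>?A)"
    by (rule PN.nn_integral_fst[symmetric, OF G'])
  also have "\<dots> = (\<integral>\<^sup>+a. \<integral>\<^sup>+g. \<integral>\<^sup>+d. G (a, g(i:=d)) \<partial>P \<partial>PiM ({..<n}-{i}) (\<lambda>_. P) \<partial>?A)"
  proof (rule nn_integral_cong)
    fix a assume a: "a \<in> space ?A"
    have ins: "{..<n} = insert i ({..<n}-{i})" using i by auto
    have G_a: "(\<lambda>f. G (a, f)) \<in> borel_measurable (PiM (insert i ({..<n}-{i})) (\<lambda>_. P))"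
      using a by (subst ins[symmetric], subst measurable_cong_sets[OF sets_PiM_P refl])
        (auto intro!: measurable_Pair2')
    show "(\<integral>\<^sup>+f. G (a, f) \<partial>PiM {..<n} (\<lambda>_. P))
        = (\<integral>\<^sup>+g. \<integral>\<^sup>+d. G (a, g(i:=d)) \<partial>P \<partial>PiM ({..<n}-{i}) (\<lambda>_. P))"
      by (subst ins, rule PiP.product_nn_integral_insert[OF _ _ G_a]) auto
  qed
  finally show ?thesis .
qed

abbreviation eps :: "real \<times> real \<times> 'z \<Rightarrow> real" where
  "eps p \<equiv> fst p - fP (snd (snd p))"

abbreviation xi :: "real \<times> real \<times> 'z \<Rightarrow> real" where
  "xi p \<equiv> fst (snd p) - gP (snd (snd p))"

lemma nn_integral_eps_sq_mult:
  assumes "h \<in> borel_measurable borel"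
  shows "(\<integral>\<^sup>+p. ennreal ((eps p)\<^sup>2) * h (snd (snd p)) \<partial>P)
    = (\<integral>\<^sup>+p. ennreal (uP (snd (snd p))) * h (snd (snd p)) \<partial>P)"
proof -
  have "(\<lambda>(x', y', z'). (x' - fP z')\<^sup>2) \<in> borel_measurable P" "(\<lambda>(x', y', z'). z') \<in> measurable P borel"
    unfolding measurable_P_eq by (simp_all add: case_prod_beta') measurable
  from is_cond_exp_fun_nonneg_nn_integral_mult[OF uP this assms] show ?thesis
    by (simp add: case_prod_beta')
qed

lemma nn_integral_xi_sq_mult:
  assumes "h \<in> borel_measurable borel"
  shows "(\<integral>\<^sup>+p. ennreal ((xi p)\<^sup>2) * h (snd (snd p)) \<partial>P)
    = (\<integral>\<^sup>+p. ennreal (vP (snd (snd p))) * h (snd (snd p)) \<partial>P)"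
proof -
  have "(\<lambda>(x', y', z'). (y' - gP z')\<^sup>2) \<in> borel_measurable P" "(\<lambda>(x', y', z'). z') \<in> measurable P borel"
    unfolding measurable_P_eq by (simp_all add: case_prod_beta') measurable
  from is_cond_exp_fun_nonneg_nn_integral_mult[OF vP this assms] show ?thesis
    by (simp add: case_prod_beta')
qed

text \<open>Given the auxiliary data and all covariates, the i-th response pair is still distributed
  according to P given its own covariate: integrate out the i-th observation first.\<close>
lemma nn_integral_obs_mult_cond:
  fixes U V :: "real \<times> real \<times> 'z \<Rightarrow> real"
  assumes i: "i < n" and h[measurable]: "h \<in> borel_measurable (N n \<Otimes>\<^sub>M PiM {..<n} (\<lambda>_. borel))"
    and U[measurable]: "U \<in> borel_measurable (borel \<Otimes>\<^sub>M borel \<Otimes>\<^sub>M borel)"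
    and V[measurable]: "V \<in> borel_measurable (borel \<Otimes>\<^sub>M borel \<Otimes>\<^sub>M borel)"
    and UV: "\<And>k. k \<in> borel_measurable borel \<Longrightarrow>
       (\<integral>\<^sup>+p. ennreal (U p) * k (snd (snd p)) \<partial>P) = (\<integral>\<^sup>+p. ennreal (V p) * k (snd (snd p)) \<partial>P)"
  shows "(\<integral>\<^sup>+\<omega>. ennreal (U (obs n i \<omega>)) * h (aux n \<omega>, zsample n \<omega>) \<partial>M) =
         (\<integral>\<^sup>+\<omega>. ennreal (V (obs n i \<omega>)) * h (aux n \<omega>, zsample n \<omega>) \<partial>M)"
proof -
  define zs where "zs f = (\<lambda>j\<in>{..<n}. snd (snd (f j)))" for f :: "nat \<Rightarrow> real \<times> real \<times> 'z"
  have zsample_eq: "zsample n \<omega> = zs (sample n \<omega>)" for \<omega>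
    by (auto simp: zs_def zsample_def sample_def fun_eq_iff)
  have obs_eq: "obs n i \<omega> = sample n \<omega> i" for \<omega>
    using i by (simp add: sample_def)
  define G where "G W = (\<lambda>(a, f). ennreal (W (f i)) * h (a, zs f))" for W
  have G_meas: "G W \<in> borel_measurable (N n \<Otimes>\<^sub>M PiM {..<n} (\<lambda>_. borel))"
    if [measurable]: "W \<in> borel_measurable (borel \<Otimes>\<^sub>M borel \<Otimes>\<^sub>M borel)" for W
    unfolding G_def zs_def using i by (subst borel_eq_pair3) measurable
  have slice: "(\<integral>\<^sup>+d. G U (a, g(i:=d)) \<partial>P) = (\<integral>\<^sup>+d. G V (a, g(i:=d)) \<partial>P)"
    if a: "a \<in> space (N n)" for a g
  proof -
    define k where "k = (\<lambda>zz. h (a, \<lambda>j\<in>{..<n}. if j = i then zz else snd (snd (g j))))"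
    have "(\<lambda>zz. \<lambda>j\<in>{..<n}. if j = i then zz else snd (snd (g j))) \<in> measurable borel (PiM {..<n} (\<lambda>_. borel))"
      by (rule measurable_restrict) auto
    then have k: "k \<in> borel_measurable borel"
      unfolding k_def using a by (intro measurable_compose[OF _ measurable_Pair2[OF h]]) auto
    have "zs (g(i:=d)) = (\<lambda>j\<in>{..<n}. if j = i then snd (snd d) else snd (snd (g j)))" for d
      by (auto simp: zs_def fun_eq_iff)
    then have "G W (a, g(i:=d)) = ennreal (W d) * k (snd (snd d))" for W d
      by (simp add: G_def k_def)
    then show ?thesis using UV[OF k] by simp
  qed
  have "(\<integral>\<^sup>+\<omega>. ennreal (U (obs n i \<omega>)) * h (aux n \<omega>, zsample n \<omega>) \<partial>M) = (\<integral>\<^sup>+\<omega>. G U (aux n \<omega>, sample n \<omega>) \<partial>M)"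
    by (simp add: G_def zsample_eq obs_eq)
  also have "\<dots> = (\<integral>\<^sup>+a. \<integral>\<^sup>+g. \<integral>\<^sup>+d. G U (a, g(i:=d)) \<partial>P \<partial>PiM ({..<n}-{i}) (\<lambda>_. P) \<partial>distr M (N n) (aux n))"
    by (rule nn_integral_aux_sample[OF i G_meas[OF U]])
  also have "\<dots> = (\<integral>\<^sup>+a. \<integral>\<^sup>+g. \<integral>\<^sup>+d. G V (a, g(i:=d)) \<partial>P \<partial>PiM ({..<n}-{i}) (\<lambda>_. P) \<partial>distr M (N n) (aux n))"
    by (rule nn_integral_cong, rule nn_integral_cong) (simp add: slice)
  also have "\<dots> = (\<integral>\<^sup>+\<omega>. G V (aux n \<omega>, sample n \<omega>) \<partial>M)"
    by (rule nn_integral_aux_sample[OF i G_meas[OF V], symmetric])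
  also have "\<dots> = (\<integral>\<^sup>+\<omega>. ennreal (V (obs n i \<omega>)) * h (aux n \<omega>, zsample n \<omega>) \<partial>M)"
    by (simp add: G_def zsample_eq obs_eq)
  finally show ?thesis .
qed

text \<open>The truncation to the event where the weighted average of V' is at most \<eta> depends only
  on the auxiliary data and the covariates, so V' may replace U inside the expectation.\<close>
lemma nn_integral_weighted_mean_truncated_le:
  fixes U :: "real \<times> real \<times> 'z \<Rightarrow> real" and V' :: "'z \<Rightarrow> real" and e :: "'b \<Rightarrow> 'z \<Rightarrow> real"
  assumes U[measurable]: "U \<in> borel_measurable (borel \<Otimes>\<^sub>M borel \<Otimes>\<^sub>M borel)" and U_nonneg: "\<And>p. 0 \<le> U p"
    and V'[measurable]: "V' \<in> borel_measurable borel" and V'_nonneg: "\<And>zz. 0 \<le> V' zz"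
    and UV': "\<And>k. k \<in> borel_measurable borel \<Longrightarrow>
       (\<integral>\<^sup>+p. ennreal (U p) * k (snd (snd p)) \<partial>P) = (\<integral>\<^sup>+p. ennreal (V' (snd (snd p))) * k (snd (snd p)) \<partial>P)"
    and e[measurable]: "case_prod e \<in> borel_measurable (N n \<Otimes>\<^sub>M borel)"
  shows "(\<integral>\<^sup>+\<omega>. ennreal (sample_mean n (\<lambda>i. U (obs n i \<omega>) * (e (aux n \<omega>) (zobs n i \<omega>))\<^sup>2)) *
      (if sample_mean n (\<lambda>i. V' (zobs n i \<omega>) * (e (aux n \<omega>) (zobs n i \<omega>))\<^sup>2) \<le> \<eta> then 1 else 0) \<partial>M)
    \<le> ennreal \<eta>"
proof -
  define I where "I \<omega> = (if sample_mean n (\<lambda>i. V' (zobs n i \<omega>) * (e (aux n \<omega>) (zobs n i \<omega>))\<^sup>2) \<le> \<eta>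
    then 1 else 0 :: ennreal)" for \<omega>
  have I_meas[measurable]: "I \<in> borel_measurable M" unfolding I_def by measurable
  define h where "h i = (\<lambda>(a, zs). ennreal ((e a (zs i))\<^sup>2) *
      (if sample_mean n (\<lambda>j. V' (zs j) * (e a (zs j))\<^sup>2) \<le> \<eta> then 1 else 0 :: ennreal))" for i
  have h_meas: "i < n \<Longrightarrow> h i \<in> borel_measurable (N n \<Otimes>\<^sub>M PiM {..<n} (\<lambda>_. borel))" for i
    unfolding h_def by measurable
  have h_eq: "i < n \<Longrightarrow> h i (aux n \<omega>, zsample n \<omega>) = ennreal ((e (aux n \<omega>) (zobs n i \<omega>))\<^sup>2) * I \<omega>" for i \<omega>
    unfolding h_def I_def zsample_def by (auto intro!: arg_cong2[where f="(*)"] sum.cong)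
  have V'_meas: "(\<lambda>p. V' (snd (snd p))) \<in> borel_measurable (borel \<Otimes>\<^sub>M borel \<Otimes>\<^sub>M borel)" by measurable
  have summand_eq: "(\<integral>\<^sup>+\<omega>. ennreal (U (obs n i \<omega>)) * (ennreal ((e (aux n \<omega>) (zobs n i \<omega>))\<^sup>2) * I \<omega>) \<partial>M)
     = (\<integral>\<^sup>+\<omega>. ennreal (V' (zobs n i \<omega>)) * (ennreal ((e (aux n \<omega>) (zobs n i \<omega>))\<^sup>2) * I \<omega>) \<partial>M)"
    if "i < n" for i
    using nn_integral_obs_mult_cond[OF that h_meas[OF that] U V'_meas UV'] that by (simp add: h_eq)
  have "(\<integral>\<^sup>+\<omega>. ennreal (sample_mean n (\<lambda>i. U (obs n i \<omega>) * (e (aux n \<omega>) (zobs n i \<omega>))\<^sup>2)) * I \<omega> \<partial>M)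
     = ennreal (1 / real n) *
       (\<Sum>i<n. \<integral>\<^sup>+\<omega>. ennreal (U (obs n i \<omega>)) * (ennreal ((e (aux n \<omega>) (zobs n i \<omega>))\<^sup>2) * I \<omega>) \<partial>M)"
    by (simp add: ennreal_sample_mean_mult U_nonneg nn_integral_cmult nn_integral_sum)
  also have "\<dots> = ennreal (1 / real n) *
       (\<Sum>i<n. \<integral>\<^sup>+\<omega>. ennreal (V' (zobs n i \<omega>)) * (ennreal ((e (aux n \<omega>) (zobs n i \<omega>))\<^sup>2) * I \<omega>) \<partial>M)"
    by (simp add: summand_eq)
  also have "\<dots> = (\<integral>\<^sup>+\<omega>. ennreal (sample_mean n (\<lambda>i. V' (zobs n i \<omega>) * (e (aux n \<omega>) (zobs n i \<omega>))\<^sup>2)) * I \<omega> \<partial>M)"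
    by (simp add: ennreal_sample_mean_mult V'_nonneg nn_integral_cmult nn_integral_sum)
  also have "\<dots> \<le> (\<integral>\<^sup>+\<omega>. ennreal \<eta> \<partial>M)"
    by (rule nn_integral_mono) (auto simp: I_def intro: ennreal_leI)
  also have "\<dots> = ennreal \<eta>" by (simp add: M.emeasure_space_1)
  finally show ?thesis unfolding I_def .
qed

lemma prob_weighted_mean_ge_tendsto_0:
  fixes U :: "real \<times> real \<times> 'z \<Rightarrow> real" and V' :: "'z \<Rightarrow> real" and e :: "nat \<Rightarrow> 'b \<Rightarrow> 'z \<Rightarrow> real"
  assumes U[measurable]: "U \<in> borel_measurable (borel \<Otimes>\<^sub>M borel \<Otimes>\<^sub>M borel)" and U_nonneg: "\<And>p. 0 \<le> U p"
    and V'[measurable]: "V' \<in> borel_measurable borel" and V'_nonneg: "\<And>zz. 0 \<le> V' zz"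
    and UV': "\<And>k. k \<in> borel_measurable borel \<Longrightarrow>
       (\<integral>\<^sup>+p. ennreal (U p) * k (snd (snd p)) \<partial>P) = (\<integral>\<^sup>+p. ennreal (V' (snd (snd p))) * k (snd (snd p)) \<partial>P)"
    and e[measurable]: "\<And>n. case_prod (e n) \<in> borel_measurable (N n \<Otimes>\<^sub>M borel)"
    and small: "small_oP M (\<lambda>n \<omega>. (\<Sum>i<n. (e n (aux n \<omega>) (z n i \<omega>))\<^sup>2 * V' (z n i \<omega>)) / real n) (\<lambda>n. 1)"
    and t: "0 < t"
  shows "(\<lambda>n. M.prob {\<omega>\<in>space M. t \<le> sample_mean n (\<lambda>i. U (obs n i \<omega>) * (e n (aux n \<omega>) (zobs n i \<omega>))\<^sup>2)})
    \<longlonglongrightarrow> 0"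
proof (rule tendsto_zero_if_eventually_le)
  fix r :: real assume r: "0 < r"
  define \<eta> where "\<eta> = r * t / 2"
  have \<eta>: "0 < \<eta>" using r t by (simp add: \<eta>_def)
  define B where "B n \<omega> = sample_mean n (\<lambda>i. V' (zobs n i \<omega>) * (e n (aux n \<omega>) (zobs n i \<omega>))\<^sup>2)" for n \<omega>
  define A where "A n \<omega> = sample_mean n (\<lambda>i. U (obs n i \<omega>) * (e n (aux n \<omega>) (zobs n i \<omega>))\<^sup>2)" for n \<omega>
  have [measurable]: "B n \<in> borel_measurable M" "A n \<in> borel_measurable M" for n
    unfolding A_def B_def by measurable
  have B_eq: "(\<Sum>i<n. (e n (aux n \<omega>) (z n i \<omega>))\<^sup>2 * V' (z n i \<omega>)) / real n / 1 = B n \<omega>" for n \<omega>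
    unfolding B_def by (auto intro!: sum.cong arg_cong2[where f="(/)"] simp: obs_def)
  have B_nonneg: "0 \<le> B n \<omega>" for n \<omega>
    unfolding B_def by (auto intro!: sum_nonneg divide_nonneg_nonneg mult_nonneg_nonneg V'_nonneg)
  have "(\<lambda>n. M.prob {\<omega>\<in>space M. \<eta> < B n \<omega>}) \<longlonglongrightarrow> 0"
    using small \<eta> unfolding small_oP_def B_eq by (simp add: abs_of_nonneg B_nonneg)
  from order_tendstoD(2)[OF this, of "r / 2"]
  have "eventually (\<lambda>n. M.prob {\<omega>\<in>space M. \<eta> < B n \<omega>} < r / 2) sequentially"
    using r by simp
  then show "eventually (\<lambda>n. M.prob {\<omega>\<in>space M. t \<le> A n \<omega>} \<le> r) sequentially"
    unfolding A_def[symmetric]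
  proof eventually_elim
    case (elim n)
    have "M.prob {\<omega>\<in>space M. t \<le> A n \<omega>}
        \<le> M.prob {\<omega>\<in>space M. t \<le> A n \<omega> \<and> B n \<omega> \<le> \<eta>} + M.prob {\<omega>\<in>space M. \<eta> < B n \<omega>}"
      by (rule order_trans[OF M.finite_measure_mono M.prob_disj_le]) auto
    also have "M.prob {\<omega>\<in>space M. t \<le> A n \<omega> \<and> B n \<omega> \<le> \<eta>} \<le> \<eta> / t"
    proof (rule M.prob_le_nn_integral_div[where I="\<lambda>\<omega>. ennreal (A n \<omega>) * (if B n \<omega> \<le> \<eta> then 1 else 0)"])
      show "(\<integral>\<^sup>+\<omega>. ennreal (A n \<omega>) * (if B n \<omega> \<le> \<eta> then 1 else 0) \<partial>M) \<le> ennreal \<eta>"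
        unfolding A_def B_def by (rule nn_integral_weighted_mean_truncated_le[OF U U_nonneg V' V'_nonneg UV' e])
    qed (use t \<eta> in \<open>auto intro: ennreal_leI\<close>)
    finally show ?case using elim t by (simp add: \<eta>_def)
  qed
qed simp

lemma prob_mean_eps_sq_gres_sq_ge_tendsto_0:
  "0 < t \<Longrightarrow> (\<lambda>n. M.prob {\<omega>\<in>space M.
      t \<le> sample_mean n (\<lambda>i. (eps (obs n i \<omega>))\<^sup>2 * (gP (zobs n i \<omega>) - ghat n (aux n \<omega>) (zobs n i \<omega>))\<^sup>2)})
    \<longlonglongrightarrow> 0"
  by (rule prob_weighted_mean_ge_tendsto_0[where U="\<lambda>p. (eps p)\<^sup>2" and V'=uP and e="\<lambda>n a zz. gP zz - ghat n a zz"])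
     (auto simp: uP_nonneg nn_integral_eps_sq_mult Bg)

lemma prob_mean_xi_sq_fres_sq_ge_tendsto_0:
  "0 < t \<Longrightarrow> (\<lambda>n. M.prob {\<omega>\<in>space M.
      t \<le> sample_mean n (\<lambda>i. (xi (obs n i \<omega>))\<^sup>2 * (fP (zobs n i \<omega>) - fhat n (aux n \<omega>) (zobs n i \<omega>))\<^sup>2)})
    \<longlonglongrightarrow> 0"
  by (rule prob_weighted_mean_ge_tendsto_0[where U="\<lambda>p. (xi p)\<^sup>2" and V'=vP and e="\<lambda>n a zz. fP zz - fhat n a zz"])
     (auto simp: vP_nonneg nn_integral_xi_sq_mult Bf)

definition Af_Ag :: "nat \<Rightarrow> 'a \<Rightarrow> real" where
  "Af_Ag n \<omega> = sample_mean n (\<lambda>i. (fP (zobs n i \<omega>) - fhat n (aux n \<omega>) (zobs n i \<omega>))\<^sup>2) *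
    sample_mean n (\<lambda>i. (gP (zobs n i \<omega>) - ghat n (aux n \<omega>) (zobs n i \<omega>))\<^sup>2)"

lemma Af_Ag_meas[measurable]: "Af_Ag n \<in> borel_measurable M"
  unfolding Af_Ag_def by measurable

lemma prob_n_Af_Ag_ge_1_tendsto_0: "(\<lambda>n. M.prob {\<omega>\<in>space M. 1 \<le> real n * Af_Ag n \<omega>}) \<longlonglongrightarrow> 0"
proof (rule tendsto_sandwich[OF _ _ tendsto_const])
  have "((\<Sum>i<n. (fP (z n i \<omega>) - fhat n (aux n \<omega>) (z n i \<omega>))\<^sup>2) / real n) *
      ((\<Sum>i<n. (gP (z n i \<omega>) - ghat n (aux n \<omega>) (z n i \<omega>))\<^sup>2) / real n) = Af_Ag n \<omega>" for n \<omega>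
    unfolding Af_Ag_def by (auto intro!: arg_cong2[where f="(*)"] arg_cong2[where f="(/)"] sum.cong simp: obs_def)
  then have "\<forall>\<delta>>0. (\<lambda>n. M.prob {\<omega>\<in>space M. \<delta> < \<bar>Af_Ag n \<omega> / (1 / real n)\<bar>}) \<longlonglongrightarrow> 0"
    using AfAg unfolding small_oP_def by presburger
  then show "(\<lambda>n. M.prob {\<omega>\<in>space M. 1/2 < \<bar>Af_Ag n \<omega> / (1 / real n)\<bar>}) \<longlonglongrightarrow> 0"
    by (rule spec[where x="1/2", THEN mp]) simp
  show "\<forall>\<^sub>F n in sequentially. M.prob {\<omega>\<in>space M. 1 \<le> real n * Af_Ag n \<omega>}
      \<le> M.prob {\<omega>\<in>space M. 1/2 < \<bar>Af_Ag n \<omega> / (1 / real n)\<bar>}"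
    by (intro always_eventually allI M.finite_measure_mono) (auto simp: mult.commute)
qed simp

definition score :: "nat \<Rightarrow> real \<times> real \<times> 'z \<Rightarrow> real" where
  "score k p = eps p * xi p * w k (snd (snd p))"

definition rho :: "nat \<Rightarrow> real" where
  "rho k = (\<integral>p. score k p \<partial>P)"

lemma score_meas[measurable]: "score k \<in> borel_measurable (borel \<Otimes>\<^sub>M borel \<Otimes>\<^sub>M borel)"
  unfolding score_def by measurable

lemma score_meas_borel[measurable]: "score k \<in> borel_measurable borel"
  by (subst borel_eq_pair3) (rule score_meas)

lemma score_meas_P[measurable]: "score k \<in> borel_measurable P"
  unfolding measurable_P_eq by (rule score_meas)

lemma integrable_eps_sq_xi_sq: "integrable P (\<lambda>p. (eps p)\<^sup>2 * (xi p)\<^sup>2)"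
proof (rule integrableI_nonneg)
  show "(\<lambda>p. (eps p)\<^sup>2 * (xi p)\<^sup>2) \<in> borel_measurable P" unfolding measurable_P_eq by measurable
  show "(\<integral>\<^sup>+p. ennreal ((eps p)\<^sup>2 * (xi p)\<^sup>2) \<partial>P) < \<infinity>"
    using fin_mom by (simp add: split_beta')
qed simp

lemma integrable_score_sq: "k \<in> {1..K} \<Longrightarrow> integrable P (\<lambda>p. (score k p)\<^sup>2)"
proof (rule Bochner_Integration.integrable_bound[OF integrable_mult_right[OF integrable_eps_sq_xi_sq, of "C\<^sup>2"]])
  assume k: "k \<in> {1..K}"
  show "(\<lambda>p. (score k p)\<^sup>2) \<in> borel_measurable P" by measurable
  show "AE p in P. norm ((score k p)\<^sup>2) \<le> norm (C\<^sup>2 * ((eps p)\<^sup>2 * (xi p)\<^sup>2))"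
  proof (rule AE_I2)
    fix p :: "real \<times> real \<times> 'z"
    have "(w k (snd (snd p)))\<^sup>2 \<le> C\<^sup>2"
      using w_bdd[OF k] C by (metis abs_le_square_iff abs_of_pos)
    moreover have "(score k p)\<^sup>2 = (w k (snd (snd p)))\<^sup>2 * ((eps p)\<^sup>2 * (xi p)\<^sup>2)"
      unfolding score_def power_mult_distrib by (simp only: mult_ac)
    ultimately have "(score k p)\<^sup>2 \<le> C\<^sup>2 * ((eps p)\<^sup>2 * (xi p)\<^sup>2)"
      by (metis mult_right_mono zero_le_mult_iff zero_le_power2)
    then show "norm ((score k p)\<^sup>2) \<le> norm (C\<^sup>2 * ((eps p)\<^sup>2 * (xi p)\<^sup>2))" by simp
  qed
qed

lemma integrable_score: "k \<in> {1..K} \<Longrightarrow> integrable P (score k)"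
  using PP.square_integrable_imp_integrable[OF _ integrable_score_sq] by simp

lemma integral_obs: "i < n \<Longrightarrow> g \<in> borel_measurable borel \<Longrightarrow> (\<integral>\<omega>. g (obs n i \<omega>) \<partial>M) = (\<integral>p. (g p :: real) \<partial>P)"
  by (subst integral_distr[symmetric]) (auto simp: distr_obs)

lemma integrable_obs_iff:
  "i < n \<Longrightarrow> g \<in> borel_measurable borel \<Longrightarrow> integrable M (\<lambda>\<omega>. g (obs n i \<omega>)) \<longleftrightarrow> integrable P (g :: _ \<Rightarrow> real)"
  by (subst integrable_distr_eq[symmetric]) (auto simp: distr_obs)

lemma indep_var_obs:
  assumes ij: "i < n" "j < n" "i \<noteq> j" and g[measurable]: "g \<in> borel_measurable (borel :: (real \<times> real \<times> 'z) measure)"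
  shows "M.indep_var borel (\<lambda>\<omega>. (g (obs n i \<omega>) :: real)) borel (\<lambda>\<omega>. g (obs n j \<omega>))"
proof -
  have iv: "M.indep_var (PiM {i} (\<lambda>_. borel)) (\<lambda>\<omega>. restrict (\<lambda>i. obs n i \<omega>) {i})
      (PiM {j} (\<lambda>_. borel)) (\<lambda>\<omega>. restrict (\<lambda>i. obs n i \<omega>) {j})"
    by (rule M.indep_var_restrict[OF indep_vars_obs]) (use ij in auto)
  have gi: "(\<lambda>f. g (f i)) \<in> borel_measurable (PiM {i} (\<lambda>_. borel))" by measurable
  have gj: "(\<lambda>f. g (f j)) \<in> borel_measurable (PiM {j} (\<lambda>_. borel))" by measurable
  from M.indep_var_compose[OF iv gi gj] show ?thesis by (simp add: o_def)
qed

lemma variance_sum_score: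
  assumes k: "k \<in> {1..K}"
  shows "integrable M (\<lambda>\<omega>. (\<Sum>i<n. score k (obs n i \<omega>) - rho k)\<^sup>2)"
    and "(\<integral>\<omega>. (\<Sum>i<n. score k (obs n i \<omega>) - rho k)\<^sup>2 \<partial>M) = real n * (\<integral>p. (score k p - rho k)\<^sup>2 \<partial>P)"
proof -
  define U where "U = (\<lambda>i \<omega>. score k (obs n i \<omega>) - rho k)"
  have centered_meas[measurable]: "(\<lambda>p. score k p - rho k) \<in> borel_measurable borel"
    by measurable
  have [measurable]: "(\<lambda>p. (score k p - rho k)\<^sup>2) \<in> borel_measurable borel"
    by measurable
  have int_P: "integrable P (\<lambda>p. score k p - rho k)" using integrable_score[OF k] by simp
  have int_P2: "integrable P (\<lambda>p. (score k p - rho k)\<^sup>2)"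
    using integrable_score_sq[OF k] integrable_score[OF k] by (simp add: power2_diff)
  have U_int: "integrable M (U i)" "integrable M (\<lambda>\<omega>. U i \<omega> * U i \<omega>)" if "i < n" for i
    using int_P int_P2 integrable_obs_iff[OF that, of "\<lambda>p. score k p - rho k"]
      integrable_obs_iff[OF that, of "\<lambda>p. (score k p - rho k)\<^sup>2"]
    by (simp_all add: U_def power2_eq_square)
  have U_indep: "M.indep_var borel (U i) borel (U j)" if "i < n" "j < n" "i \<noteq> j" for i j
    unfolding U_def using indep_var_obs[OF that centered_meas] by simp
  have U_prod_int: "integrable M (\<lambda>\<omega>. U i \<omega> * U j \<omega>)" if "i < n" "j < n" for i j
    using that U_int M.indep_var_integrable[OF U_indep] by (cases "i = j") auto
  have U_prod_integral: "(\<integral>\<omega>. U i \<omega> * U j \<omega> \<partial>M) = (if i = j then (\<integral>p. (score k p - rho k)\<^sup>2 \<partial>P) else 0)"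
    if "i < n" "j < n" for i j
  proof (cases "i = j")
    case True
    then show ?thesis using that integral_obs[of i n "\<lambda>p. (score k p - rho k)\<^sup>2"]
      by (simp add: U_def power2_eq_square)
  next
    case False
    have "(\<integral>\<omega>. U i \<omega> \<partial>M) = 0"
      using that integral_obs[of i n "\<lambda>p. score k p - rho k"] int_P integrable_score[OF k]
      by (simp add: U_def rho_def PP.prob_space)
    then show ?thesis using False that M.indep_var_lebesgue_integral[OF U_indep] U_int by simp
  qed
  have square_eq: "(\<Sum>i<n. score k (obs n i \<omega>) - rho k)\<^sup>2 = (\<Sum>i<n. \<Sum>j<n. U i \<omega> * U j \<omega>)" for \<omega>
    unfolding U_def power2_eq_square by (simp add: sum_product)
  show "integrable M (\<lambda>\<omega>. (\<Sum>i<n. score k (obs n i \<omega>) - rho k)\<^sup>2)"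
    unfolding square_eq by (intro Bochner_Integration.integrable_sum U_prod_int) auto
  have "(\<integral>\<omega>. (\<Sum>i<n. score k (obs n i \<omega>) - rho k)\<^sup>2 \<partial>M) = (\<integral>\<omega>. (\<Sum>i<n. \<Sum>j<n. U i \<omega> * U j \<omega>) \<partial>M)"
    by (simp only: square_eq)
  also have "\<dots> = (\<Sum>i<n. \<integral>\<omega>. (\<Sum>j<n. U i \<omega> * U j \<omega>) \<partial>M)"
    by (rule Bochner_Integration.integral_sum) (auto intro!: Bochner_Integration.integrable_sum U_prod_int)
  also have "\<dots> = (\<Sum>i<n. \<Sum>j<n. \<integral>\<omega>. U i \<omega> * U j \<omega> \<partial>M)"
    by (intro sum.cong refl Bochner_Integration.integral_sum) (auto intro: U_prod_int)
  also have "\<dots> = real n * (\<integral>p. (score k p - rho k)\<^sup>2 \<partial>P)"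
    by (simp add: U_prod_integral)
  finally show "(\<integral>\<omega>. (\<Sum>i<n. score k (obs n i \<omega>) - rho k)\<^sup>2 \<partial>M) = real n * (\<integral>p. (score k p - rho k)\<^sup>2 \<partial>P)" .
qed

lemma prob_mean_score_dev_tendsto_0:
  assumes k: "k \<in> {1..K}" and \<delta>: "0 < \<delta>"
  shows "(\<lambda>n. M.prob {\<omega>\<in>space M. \<delta> \<le> \<bar>sample_mean n (\<lambda>i. score k (obs n i \<omega>)) - rho k\<bar>}) \<longlonglongrightarrow> 0"
proof (rule tendsto_sandwich[OF _ _ tendsto_const])
  define \<tau> where "\<tau> = (\<integral>p. (score k p - rho k)\<^sup>2 \<partial>P)"
  show "(\<lambda>n. (\<tau> / \<delta>\<^sup>2) * (1 / real n)) \<longlonglongrightarrow> 0"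
    using tendsto_mult_left[OF lim_1_over_n, of "\<tau> / \<delta>\<^sup>2"] by simp
  show "eventually (\<lambda>n. M.prob {\<omega>\<in>space M. \<delta> \<le> \<bar>sample_mean n (\<lambda>i. score k (obs n i \<omega>)) - rho k\<bar>}
      \<le> (\<tau> / \<delta>\<^sup>2) * (1 / real n)) sequentially"
  proof (rule eventually_sequentiallyI[of 1])
    fix n :: nat assume n: "1 \<le> n"
    define S where "S \<omega> = (\<Sum>i<n. score k (obs n i \<omega>) - rho k)" for \<omega>
    have "\<delta> \<le> \<bar>sample_mean n (\<lambda>i. score k (obs n i \<omega>)) - rho k\<bar> \<longleftrightarrow> (real n * \<delta>)\<^sup>2 \<le> (S \<omega>)\<^sup>2" for \<omega>
    proof -
      have "sample_mean n (\<lambda>i. score k (obs n i \<omega>)) - rho k = S \<omega> / real n"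
        using n by (simp add: S_def sum_subtractf field_simps)
      then have "\<delta> \<le> \<bar>sample_mean n (\<lambda>i. score k (obs n i \<omega>)) - rho k\<bar> \<longleftrightarrow> real n * \<delta> \<le> \<bar>S \<omega>\<bar>"
        using n by (simp add: field_simps abs_divide)
      also have "\<dots> \<longleftrightarrow> (real n * \<delta>)\<^sup>2 \<le> (S \<omega>)\<^sup>2"
        using \<delta> by (metis abs_le_square_iff abs_of_nonneg mult_nonneg_nonneg of_nat_0_le_iff less_imp_le)
      finally show ?thesis .
    qed
    then have "M.prob {\<omega>\<in>space M. \<delta> \<le> \<bar>sample_mean n (\<lambda>i. score k (obs n i \<omega>)) - rho k\<bar>}
        = M.prob {\<omega>\<in>space M. (real n * \<delta>)\<^sup>2 \<le> (S \<omega>)\<^sup>2}" by simp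
    also have "\<dots> \<le> (\<integral>\<omega>. (S \<omega>)\<^sup>2 \<partial>M) / (real n * \<delta>)\<^sup>2"
      using variance_sum_score(1)[OF k] n \<delta> unfolding S_def
      by (intro integral_Markov_inequality_measure[of _ _ "space M"]) auto
    also have "\<dots> = real n * \<tau> / (real n * \<delta>)\<^sup>2"
      unfolding S_def by (simp add: variance_sum_score(2)[OF k] \<tau>_def)
    also have "\<dots> = (\<tau> / \<delta>\<^sup>2) * (1 / real n)"
      using n by (simp add: field_simps power2_eq_square)
    finally show "M.prob {\<omega>\<in>space M. \<delta> \<le> \<bar>sample_mean n (\<lambda>i. score k (obs n i \<omega>)) - rho k\<bar>}
        \<le> (\<tau> / \<delta>\<^sup>2) * (1 / real n)" .
  qed
qed simp

lemma prob_mean_eps_sq_xi_sq_ge_le: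
  assumes t: "0 < t"
  shows "M.prob {\<omega>\<in>space M. t \<le> sample_mean n (\<lambda>i. (eps (obs n i \<omega>))\<^sup>2 * (xi (obs n i \<omega>))\<^sup>2)}
     \<le> (\<integral>p. (eps p)\<^sup>2 * (xi p)\<^sup>2 \<partial>P) / t"
proof (cases "n = 0")
  case True
  then show ?thesis using t by (simp add: integral_nonneg_AE)
next
  case False
  have meas: "(\<lambda>p::real \<times> real \<times> 'z. (eps p)\<^sup>2 * (xi p)\<^sup>2) \<in> borel_measurable borel"
    by (subst borel_eq_pair3) measurable
  have int_i: "i < n \<Longrightarrow> integrable M (\<lambda>\<omega>. (eps (obs n i \<omega>))\<^sup>2 * (xi (obs n i \<omega>))\<^sup>2)" for i
    using integrable_obs_iff[OF _ meas, of i n] integrable_eps_sq_xi_sq by simp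
  have "M.prob {\<omega>\<in>space M. t \<le> sample_mean n (\<lambda>i. (eps (obs n i \<omega>))\<^sup>2 * (xi (obs n i \<omega>))\<^sup>2)}
     \<le> (\<integral>\<omega>. sample_mean n (\<lambda>i. (eps (obs n i \<omega>))\<^sup>2 * (xi (obs n i \<omega>))\<^sup>2) \<partial>M) / t"
    using t int_i
    by (intro integral_Markov_inequality_measure[of _ _ "space M"] integrable_divide
        Bochner_Integration.integrable_sum)
      (auto intro!: AE_I2 sum_nonneg divide_nonneg_nonneg)
  also have "(\<integral>\<omega>. sample_mean n (\<lambda>i. (eps (obs n i \<omega>))\<^sup>2 * (xi (obs n i \<omega>))\<^sup>2) \<partial>M)
      = (\<integral>p. (eps p)\<^sup>2 * (xi p)\<^sup>2 \<partial>P)"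
    using False int_i by (simp add: Bochner_Integration.integral_sum integral_obs[OF _ meas])
  finally show ?thesis .
qed

definition resid_prod :: "nat \<Rightarrow> nat \<Rightarrow> 'b \<Rightarrow> real \<times> real \<times> 'z \<Rightarrow> real" where
  "resid_prod n k a p =
     (fst p - fhat n a (snd (snd p))) * (fst (snd p) - ghat n a (snd (snd p))) * w k (snd (snd p))"

lemma resid_prod_meas[measurable]:
  "(\<lambda>(a, p). resid_prod n k a p) \<in> borel_measurable (N n \<Otimes>\<^sub>M (borel \<Otimes>\<^sub>M borel \<Otimes>\<^sub>M borel))"
  unfolding resid_prod_def by measurable

text \<open>This is where absolute continuity of P enters: without it the empirical variance in the
  denominator of T could vanish with positive probability.\<close>
lemma resid_prod_level_null_sets:
  assumes a: "a \<in> space (N n)" and r: "r \<noteq> 0"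
  shows "{p \<in> space P. resid_prod n k a p = r} \<in> null_sets P"
proof -
  have "fhat n a \<in> borel_measurable borel" "ghat n a \<in> borel_measurable borel"
    using measurable_Pair2[OF fhat_meas a] measurable_Pair2[OF ghat_meas a] by simp_all
  from null_sets_lborel_residual_product_level[OF this w_meas r]
  have "{p. resid_prod n k a p = r} \<in> null_sets P"
    using P_ac unfolding absolutely_continuous_def resid_prod_def by auto
  then show ?thesis using sets_eq_imp_space_eq[OF P_sets] by simp
qed

lemma prob_resid_prod_tie_eq_0:
  assumes n: "2 \<le> n"
  shows "M.prob {\<omega>\<in>space M. resid_prod n k (aux n \<omega>) (obs n 0 \<omega>) = resid_prod n k (aux n \<omega>) (obs n 1 \<omega>)
    \<and> resid_prod n k (aux n \<omega>) (obs n 1 \<omega>) \<noteq> 0} = 0"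
proof -
  define G where "G = (\<lambda>(a, f::nat \<Rightarrow> real \<times> real \<times> 'z).
    if resid_prod n k a (f 0) = resid_prod n k a (f 1) \<and> resid_prod n k a (f 1) \<noteq> 0 then 1 else (0::ennreal))"
  define E where "E = {\<omega>\<in>space M. resid_prod n k (aux n \<omega>) (obs n 0 \<omega>) = resid_prod n k (aux n \<omega>) (obs n 1 \<omega>)
    \<and> resid_prod n k (aux n \<omega>) (obs n 1 \<omega>) \<noteq> 0}"
  have n0: "0 < n" "(0::nat) \<in> {..<n}" "(1::nat) \<in> {..<n}" using n by auto
  have "(\<lambda>(a, f). resid_prod n k a (f i)) \<in> borel_measurable (N n \<Otimes>\<^sub>M PiM {..<n} (\<lambda>_. borel))"
    if "i \<in> {..<n}" for i
    using that by (subst borel_eq_pair3) measurable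
  then have G_meas: "G \<in> borel_measurable (N n \<Otimes>\<^sub>M PiM {..<n} (\<lambda>_. borel))"
    unfolding G_def using n0 by (simp add: split_beta') measurable
  have slice_null: "(\<integral>\<^sup>+d. G (a, g(0:=d)) \<partial>P) = 0" if a: "a \<in> space (N n)" for a g
  proof (cases "resid_prod n k a (g 1) = 0")
    case False
    have "(\<integral>\<^sup>+d. G (a, g(0:=d)) \<partial>P) = (\<integral>\<^sup>+d. indicator {p \<in> space P. resid_prod n k a p = resid_prod n k a (g 1)} d \<partial>P)"
      using False by (intro nn_integral_cong) (auto simp: G_def indicator_def)
    then show ?thesis
      using resid_prod_level_null_sets[OF a False] by (simp add: null_sets_def)
  qed (simp add: G_def)
  have "emeasure M E = (\<integral>\<^sup>+\<omega>. indicator E \<omega> \<partial>M)"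
    by (rule nn_integral_indicator[symmetric]) (simp add: E_def)
  also have "\<dots> = (\<integral>\<^sup>+\<omega>. G (aux n \<omega>, sample n \<omega>) \<partial>M)"
    using n0 by (intro nn_integral_cong) (auto simp: E_def G_def sample_def indicator_def)
  also have "\<dots> = (\<integral>\<^sup>+a. \<integral>\<^sup>+g. \<integral>\<^sup>+d. G (a, g(0:=d)) \<partial>P \<partial>PiM ({..<n}-{0}) (\<lambda>_. P) \<partial>distr M (N n) (aux n))"
    by (rule nn_integral_aux_sample[OF n0(1) G_meas])
  also have "\<dots> = (\<integral>\<^sup>+a. \<integral>\<^sup>+g. 0 \<partial>PiM ({..<n}-{0}) (\<lambda>_. P) \<partial>distr M (N n) (aux n))"
    by (rule nn_integral_cong, rule nn_integral_cong) (simp add: slice_null)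
  finally show ?thesis unfolding E_def by (simp add: M.emeasure_eq_measure)
qed

definition Tk :: "nat \<Rightarrow> nat \<Rightarrow> 'a \<Rightarrow> real" where
  "Tk n k \<omega> = T_stat n (\<lambda>i. resid_prod n k (aux n \<omega>) (obs n i \<omega>))"

lemma Tk_meas[measurable]: "Tk n k \<in> borel_measurable M"
  unfolding Tk_def T_stat_def Let_def resid_prod_def by measurable

definition bad_event :: "nat \<Rightarrow> nat \<Rightarrow> real \<Rightarrow> 'a set" where
  "bad_event n k t = {\<omega> \<in> space M.
      \<bar>rho k\<bar> / 8 \<le> \<bar>sample_mean n (\<lambda>i. score k (obs n i \<omega>)) - rho k\<bar>
    \<or> (\<bar>rho k\<bar> / (8 * C))\<^sup>2
        \<le> sample_mean n (\<lambda>i. (eps (obs n i \<omega>))\<^sup>2 * (gP (zobs n i \<omega>) - ghat n (aux n \<omega>) (zobs n i \<omega>))\<^sup>2)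
    \<or> (\<bar>rho k\<bar> / (8 * C))\<^sup>2
        \<le> sample_mean n (\<lambda>i. (xi (obs n i \<omega>))\<^sup>2 * (fP (zobs n i \<omega>) - fhat n (aux n \<omega>) (zobs n i \<omega>))\<^sup>2)
    \<or> 1 \<le> real n * Af_Ag n \<omega>
    \<or> t \<le> sample_mean n (\<lambda>i. (eps (obs n i \<omega>))\<^sup>2 * (xi (obs n i \<omega>))\<^sup>2)
    \<or> resid_prod n k (aux n \<omega>) (obs n 0 \<omega>) = resid_prod n k (aux n \<omega>) (obs n 1 \<omega>)
      \<and> resid_prod n k (aux n \<omega>) (obs n 1 \<omega>) \<noteq> 0}"

lemma bad_event_sets[measurable]: "bad_event n k t \<in> sets M"
  unfolding bad_event_def resid_prod_def by measurable

lemma abs_Tk_ge_off_bad_event: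
  assumes k: "k \<in> {1..K}" and rho: "rho k \<noteq> 0" and n: "2 \<le> n"
    and large_n: "C / sqrt (real n) \<le> \<bar>rho k\<bar> / 8"
    and \<omega>: "\<omega> \<in> space M - bad_event n k t"
  shows "sqrt (real n) * (\<bar>rho k\<bar> / 2) / sqrt (4 * C\<^sup>2 * (t + 2 * (\<bar>rho k\<bar> / (8 * C))\<^sup>2 + 1))
    \<le> \<bar>Tk n k \<omega>\<bar>"
  unfolding Tk_def
proof (rule abs_T_stat_residual_product_ge[OF n C _ _ rho])
  show "\<bar>w k (zobs n i \<omega>)\<bar> \<le> C" for i using w_bdd[OF k] .
  show "resid_prod n k (aux n \<omega>) (obs n i \<omega>) =
      (eps (obs n i \<omega>) + (fP (zobs n i \<omega>) - fhat n (aux n \<omega>) (zobs n i \<omega>))) *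
      (xi (obs n i \<omega>) + (gP (zobs n i \<omega>) - ghat n (aux n \<omega>) (zobs n i \<omega>))) * w k (zobs n i \<omega>)" for i
    by (simp add: resid_prod_def)
qed (use \<omega> large_n in \<open>auto simp: bad_event_def Af_Ag_def score_def\<close>)

definition moment_eps_xi :: real where
  "moment_eps_xi = (\<integral>p. (eps p)\<^sup>2 * (xi p)\<^sup>2 \<partial>P)"

lemma moment_eps_xi_nonneg: "0 \<le> moment_eps_xi"
  unfolding moment_eps_xi_def by (intro integral_nonneg_AE) simp

lemma eventually_prob_bad_event_less:
  assumes k: "k \<in> {1..K}" and rho: "rho k \<noteq> 0" and r: "0 < r"
  shows "eventually (\<lambda>n. M.prob (bad_event n k (4 * (moment_eps_xi + 1) / r)) < r) sequentially"
proof -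
  define t where "t = 4 * (moment_eps_xi + 1) / r"
  define \<delta> where "\<delta> = (\<bar>rho k\<bar> / (8 * C))\<^sup>2"
  have \<delta>: "0 < \<delta>" using rho C by (simp add: \<delta>_def)
  have t: "0 < t" using r moment_eps_xi_nonneg by (simp add: t_def)
  have ev_score: "eventually (\<lambda>n. M.prob {\<omega>\<in>space M.
      \<bar>rho k\<bar> / 8 \<le> \<bar>sample_mean n (\<lambda>i. score k (obs n i \<omega>)) - rho k\<bar>} < r / 8) sequentially"
    using rho r by (intro order_tendstoD(2)[OF prob_mean_score_dev_tendsto_0[OF k]]) simp_all
  have ev_eps: "eventually (\<lambda>n. M.prob {\<omega>\<in>space M. \<delta> \<le> sample_mean n
      (\<lambda>i. (eps (obs n i \<omega>))\<^sup>2 * (gP (zobs n i \<omega>) - ghat n (aux n \<omega>) (zobs n i \<omega>))\<^sup>2)} < r / 8) sequentially"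
    using r by (intro order_tendstoD(2)[OF prob_mean_eps_sq_gres_sq_ge_tendsto_0[OF \<delta>]]) simp
  have ev_xi: "eventually (\<lambda>n. M.prob {\<omega>\<in>space M. \<delta> \<le> sample_mean n
      (\<lambda>i. (xi (obs n i \<omega>))\<^sup>2 * (fP (zobs n i \<omega>) - fhat n (aux n \<omega>) (zobs n i \<omega>))\<^sup>2)} < r / 8) sequentially"
    using r by (intro order_tendstoD(2)[OF prob_mean_xi_sq_fres_sq_ge_tendsto_0[OF \<delta>]]) simp
  have ev_Af_Ag: "eventually (\<lambda>n. M.prob {\<omega>\<in>space M. 1 \<le> real n * Af_Ag n \<omega>} < r / 8) sequentially"
    using r by (intro order_tendstoD(2)[OF prob_n_Af_Ag_ge_1_tendsto_0]) simp
  have prob_moment: "M.prob {\<omega>\<in>space M. t \<le> sample_mean n (\<lambda>i. (eps (obs n i \<omega>))\<^sup>2 * (xi (obs n i \<omega>))\<^sup>2)}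
      < r / 4" for n
  proof -
    have "M.prob {\<omega>\<in>space M. t \<le> sample_mean n (\<lambda>i. (eps (obs n i \<omega>))\<^sup>2 * (xi (obs n i \<omega>))\<^sup>2)}
        \<le> moment_eps_xi / t"
      unfolding moment_eps_xi_def by (rule prob_mean_eps_sq_xi_sq_ge_le[OF t])
    also have "\<dots> < r / 4" using r moment_eps_xi_nonneg by (simp add: t_def field_simps)
    finally show ?thesis .
  qed
  have "eventually (\<lambda>n. 2 \<le> n) sequentially" by (rule eventually_ge_at_top)
  with ev_score ev_eps ev_xi ev_Af_Ag
  show ?thesis unfolding t_def[symmetric]
  proof eventually_elim
    case (elim n)
    have "M.prob (bad_event n k t) \<le> r / 8 + (r / 8 + (r / 8 + (r / 8 + (r / 4 + 0))))"
      unfolding bad_event_def \<delta>_def[symmetric]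
      using elim(1-4) prob_moment[of n] prob_resid_prod_tie_eq_0[OF elim(5), of k]
      by (intro order_trans[OF M.prob_disj_le] add_mono) (auto simp: resid_prod_def)
    then show ?case using r by simp
  qed
qed

theorem prob_abs_Tk_ge_tendsto_1:
  assumes k: "k \<in> {1..K}" and rho: "rho k \<noteq> 0"
  shows "(\<lambda>n. M.prob {\<omega> \<in> space M. L \<le> \<bar>Tk n k \<omega>\<bar>}) \<longlonglongrightarrow> 1"
proof (rule tendsto_one_if_eventually_ge)
  fix r :: real assume r: "0 < r"
  define t where "t = 4 * (moment_eps_xi + 1) / r"
  define Q where "Q = 4 * C\<^sup>2 * (t + 2 * (\<bar>rho k\<bar> / (8 * C))\<^sup>2 + 1)"
  have "0 < t" using r moment_eps_xi_nonneg by (simp add: t_def)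
  then have "0 < t + 2 * (\<bar>rho k\<bar> / (8 * C))\<^sup>2 + 1"
    using zero_le_power2[of "\<bar>rho k\<bar> / (8 * C)"] by linarith
  then have Q: "0 < Q" using C by (simp add: Q_def)
  have "filterlim (\<lambda>n. sqrt (real n)) at_top sequentially"
    by (rule filterlim_compose[OF sqrt_at_top filterlim_real_sequentially])
  then have "eventually (\<lambda>n. max (8 * C / \<bar>rho k\<bar>) (2 * L * sqrt Q / \<bar>rho k\<bar>) \<le> sqrt (real n)) sequentially"
    unfolding filterlim_at_top by blast
  moreover have "eventually (\<lambda>n. 2 \<le> n) sequentially" by (rule eventually_ge_at_top)
  moreover note eventually_prob_bad_event_less[OF k rho r]
  ultimately show "eventually (\<lambda>n. 1 - r \<le> M.prob {\<omega> \<in> space M. L \<le> \<bar>Tk n k \<omega>\<bar>}) sequentially"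
    unfolding t_def[symmetric]
  proof eventually_elim
    case (elim n)
    have sqrt_n: "0 < sqrt (real n)" using elim(2) by simp
    have "C / sqrt (real n) \<le> \<bar>rho k\<bar> / 8" and "L \<le> sqrt (real n) * (\<bar>rho k\<bar> / 2) / sqrt Q"
      using elim(1) rho sqrt_n Q by (auto simp: field_simps)
    then have "space M - bad_event n k t \<subseteq> {\<omega> \<in> space M. L \<le> \<bar>Tk n k \<omega>\<bar>}"
      using abs_Tk_ge_off_bad_event[OF k rho elim(2)] unfolding Q_def by fastforce
    then have "M.prob (space M - bad_event n k t) \<le> M.prob {\<omega> \<in> space M. L \<le> \<bar>Tk n k \<omega>\<bar>}"
      by (intro M.finite_measure_mono) measurable
    then show ?case using elim(3) M.prob_compl[OF bad_event_sets[of n k t]] by linarith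
  qed
qed simp

lemma S_stat_ge_iff:
  assumes "1 \<le> K"
  shows "L \<le> S_stat K n (fhat n (aux n \<omega>)) (ghat n (aux n \<omega>)) w (\<lambda>i. x n i \<omega>) (\<lambda>i. y n i \<omega>) (\<lambda>i. z n i \<omega>)
    \<longleftrightarrow> (\<exists>k\<in>{1..K}. L \<le> \<bar>Tk n k \<omega>\<bar>)"
proof -
  have "T_stat n (R_res (fhat n (aux n \<omega>)) (ghat n (aux n \<omega>)) (w k) (\<lambda>i. x n i \<omega>) (\<lambda>i. y n i \<omega>) (\<lambda>i. z n i \<omega>))
      = Tk n k \<omega>" for k
    unfolding Tk_def by (rule T_stat_cong) (simp add: R_res_def resid_prod_def obs_def)
  then show ?thesis using assms by (simp add: S_stat_def Max_ge_iff)
qed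

theorem prob_S_stat_ge_tendsto_1:
  assumes k: "k \<in> {1..K}" and rho: "rho k \<noteq> 0"
  shows "(\<lambda>n. M.prob {\<omega> \<in> space M.
      L \<le> S_stat K n (fhat n (aux n \<omega>)) (ghat n (aux n \<omega>)) w (\<lambda>i. x n i \<omega>) (\<lambda>i. y n i \<omega>) (\<lambda>i. z n i \<omega>)})
    \<longlonglongrightarrow> 1"
proof (rule tendsto_sandwich[OF _ _ prob_abs_Tk_ge_tendsto_1[OF k rho] tendsto_const])
  have K: "1 \<le> K" using k by simp
  show "eventually (\<lambda>n. M.prob {\<omega> \<in> space M. L \<le> \<bar>Tk n k \<omega>\<bar>} \<le> M.prob {\<omega> \<in> space M.
      L \<le> S_stat K n (fhat n (aux n \<omega>)) (ghat n (aux n \<omega>)) w (\<lambda>i. x n i \<omega>) (\<lambda>i. y n i \<omega>) (\<lambda>i. z n i \<omega>)}) sequentially"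
    unfolding S_stat_ge_iff[OF K] using k by (intro always_eventually allI M.finite_measure_mono) auto
qed simp

end

theorem corollary2:
  fixes M :: "'a measure"
    and P :: "(real \<times> real \<times> 'z::euclidean_space) measure"
    and x y :: "nat \<Rightarrow> nat \<Rightarrow> 'a \<Rightarrow> real"
    and z :: "nat \<Rightarrow> nat \<Rightarrow> 'a \<Rightarrow> 'z"
    and N :: "nat \<Rightarrow> 'b measure"
    and aux :: "nat \<Rightarrow> 'a \<Rightarrow> 'b"
    and fhat ghat :: "nat \<Rightarrow> 'b \<Rightarrow> 'z \<Rightarrow> real"
    and fP gP uP vP :: "'z \<Rightarrow> real"
    and w :: "nat \<Rightarrow> 'z \<Rightarrow> real"
    and K :: nat and C :: real
  assumes M: "prob_space M"
    \<comment> \<open>P in E_0: a Borel probability law absolutely continuous w.r.t. Lebesgue measure\<close>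
    and P_prob: "prob_space P" and P_sets: "sets P = sets borel"
    and P_ac: "absolutely_continuous lborel P"
    \<comment> \<open>f_P, g_P, u_P, v_P (versions of the conditional expectations)\<close>
    and fP: "is_cond_exp_fun P (\<lambda>(x', y', z'). x') (\<lambda>(x', y', z'). z') fP"
    and gP: "is_cond_exp_fun P (\<lambda>(x', y', z'). y') (\<lambda>(x', y', z'). z') gP"
    and uP: "is_cond_exp_fun_nonneg P (\<lambda>(x', y', z'). (x' - fP z')\<^sup>2) (\<lambda>(x', y', z'). z') uP"
    and vP: "is_cond_exp_fun_nonneg P (\<lambda>(x', y', z'). (y' - gP z')\<^sup>2) (\<lambda>(x', y', z'). z') vP"
    \<comment> \<open>for each n, (x_{n,i}, y_{n,i}, z_{n,i}), i < n, are i.i.d. with law P\<close>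
    and data_rv: "\<And>n i. i < n \<Longrightarrow> (\<lambda>\<omega>. (x n i \<omega>, y n i \<omega>, z n i \<omega>)) \<in> borel_measurable M"
    and data_law: "\<And>n i. i < n \<Longrightarrow> distr M borel (\<lambda>\<omega>. (x n i \<omega>, y n i \<omega>, z n i \<omega>)) = P"
    and data_indep: "\<And>n. prob_space.indep_vars M (\<lambda>_. borel)
                        (\<lambda>i \<omega>. (x n i \<omega>, y n i \<omega>, z n i \<omega>)) {..<n}"
    \<comment> \<open>fhat, ghat are (measurable) functions of auxiliary data independent of the sample\<close>
    and aux_rv: "\<And>n. aux n \<in> measurable M (N n)"
    and fhat_meas: "\<And>n. case_prod (fhat n) \<in> borel_measurable (N n \<Otimes>\<^sub>M borel)"
    and ghat_meas: "\<And>n. case_prod (ghat n) \<in> borel_measurable (N n \<Otimes>\<^sub>M borel)"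
    and aux_indep: "\<And>n. prob_space.indep_set M
        (sigma_sets (space M) {aux n -` A \<inter> space M | A. A \<in> sets (N n)})
        (sigma_sets (space M)
           {(\<lambda>\<omega>. \<lambda>i\<in>{..<n}. (x n i \<omega>, y n i \<omega>, z n i \<omega>)) -` A \<inter> space M
             | A. A \<in> sets (Pi\<^sub>M {..<n} (\<lambda>_. borel))})"
    \<comment> \<open>weights\<close>
    and K: "1 \<le> K"
    and w_meas: "\<And>k. w k \<in> borel_measurable borel"
    and C: "C > 0" and w_bdd: "\<And>k zz. k \<in> {1..K} \<Longrightarrow> \<bar>w k zz\<bar> \<le> C"
    \<comment> \<open>rate conditions\<close>
    and AfAg: "small_oP M
        (\<lambda>n \<omega>. ((\<Sum>i<n. (fP (z n i \<omega>) - fhat n (aux n \<omega>) (z n i \<omega>))\<^sup>2) / real n) *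
               ((\<Sum>i<n. (gP (z n i \<omega>) - ghat n (aux n \<omega>) (z n i \<omega>))\<^sup>2) / real n))
        (\<lambda>n. 1 / real n)"
    and Bf: "small_oP M
        (\<lambda>n \<omega>. (\<Sum>i<n. (fP (z n i \<omega>) - fhat n (aux n \<omega>) (z n i \<omega>))\<^sup>2 * vP (z n i \<omega>)) / real n)
        (\<lambda>n. 1)"
    and Bg: "small_oP M
        (\<lambda>n \<omega>. (\<Sum>i<n. (gP (z n i \<omega>) - ghat n (aux n \<omega>) (z n i \<omega>))\<^sup>2 * uP (z n i \<omega>)) / real n)
        (\<lambda>n. 1)"
    and pos_var: "\<And>k. k \<in> {1..K} \<Longrightarrow>
        (\<integral>(x', y', z'). (x' - fP z')\<^sup>2 * (y' - gP z')\<^sup>2 * (w k z')\<^sup>2 \<partial>P) > 0"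
    and fin_mom: "(\<integral>\<^sup>+(x', y', z'). ennreal ((x' - fP z')\<^sup>2 * (y' - gP z')\<^sup>2) \<partial>P) < \<infinity>"
    \<comment> \<open>alternative: some weighted covariance is nonzero\<close>
    and alt: "\<exists>k \<in> {1..K}. (\<integral>(x', y', z'). (x' - fP z') * (y' - gP z') * w k z' \<partial>P) \<noteq> 0"
  shows "\<forall>L>0. (\<lambda>n. measure M {\<omega> \<in> space M.
            S_stat K n (fhat n (aux n \<omega>)) (ghat n (aux n \<omega>)) w
                   (\<lambda>i. x n i \<omega>) (\<lambda>i. y n i \<omega>) (\<lambda>i. z n i \<omega>) \<ge> L}) \<longlonglongrightarrow> 1"
proof -
  \<comment> \<open>pos_var is only needed for the null distribution of S_n, not under the alternative.\<close>
  interpret weighted_gcm_sample M P x y z N aux fhat ghat fP gP uP vP w K C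
  proof (rule weighted_gcm_sample.intro)
    show "fP \<in> borel_measurable borel" using fP by (simp add: is_cond_exp_fun_def)
    show "gP \<in> borel_measurable borel" using gP by (simp add: is_cond_exp_fun_def)
  qed (fact assms)+
  obtain k where k: "k \<in> {1..K}" and rho: "rho k \<noteq> 0"
    using alt by (auto simp: rho_def score_def case_prod_beta')
  show ?thesis using prob_S_stat_ge_tendsto_1[OF k rho] by blast
qed

end
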